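(* Let $t_1,\dots,t_n$ be basic terms, $\kappa$ a time variable, and $\Delta$ the saturation of the sample set $\{t_1[\kappa],\dots,t_n[\kappa]\}$. Then $\mathbf{W}\not\models\mathrm{id}\le t_1\vee\cdots\vee t_n$ (i.e. there exist a valuation $\theta$ and $p\in\overline\omega$ with $[\![t_i]\!]_\theta(p)<p$ for all $i$) if, and only if, there exists a $\Delta$-diagram $\delta$ such that $\delta(\kappa)>\delta(t_i[\kappa])$ for all $i\in\{1,\dots,n\}$.
   Context: Time warps: $\overline{\omega}=\omega\cup\{\omega\}$ with its natural order; a time warp is a monotone $f\colon\overline\omega\to\overline\omega$ with $f(0)=0$, $f(\omega)=\bigvee_{n\in\omega}f(n)$; $W$ is the set of time warps ordered pointwise, $\vee$ pointwise join, $fg:=f\circ g$, $\mathrm{id}$ identity, $\bot$ constant $0$, $\top$ maps $p\neq0$ to $\omega$. Residuals $\backslash,/$ on $W$ satisfy $f\le h/g\iff fg\le h\iff g\le f\backslash h$; $f^{\ell}:=\mathrm{id}/f$, $f^{r}:=f\backslash\mathrm{id}$, $f^{o}:=\top\backslash f$. $\mathbf{W}$ denotes the time warp algebra $\langle W,\wedge,\vee,\circ,\backslash,/,\mathrm{id},\bot,\top\rangle$. Basic terms: $t,u::=x\mid tu\mid t^{o}\mid t^{\ell}\mid t^{r}\mid\mathrm{id}\mid\bot$ ($x$ a term variable). A valuation $\theta$ maps term variables to $W$; $[\![x]\!]_\theta=\theta(x)$, $[\![tu]\!]_\theta=[\![t]\!]_\theta[\![u]\!]_\theta$, $[\![t^{\star}]\!]_\theta=([\![t]\!]_\theta)^{\star}$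 for $\star\in\{o,\ell,r\}$, $[\![\mathrm{id}]\!]_\theta=\mathrm{id}$, $[\![\bot]\!]_\theta=\bot$. Samples: $\alpha::=\kappa\mid t[\alpha]\mid\mathsf{s}(\alpha)\mid\mathsf{p}(\alpha)\mid\mathsf{last}(t)$ ($\kappa$ a time variable, $t$ a basic term). Relation $\leadsto$: $t[\alpha]\leadsto\alpha$; $\mathsf{s}(\alpha)\leadsto\alpha$; $\mathsf{p}(\alpha)\leadsto\alpha$; $(tu)[\alpha]\leadsto t[u[\alpha]]$; $t^{o}[\alpha]\leadsto t[\alpha]$; $t^{r}[\alpha]\leadsto t[t^{r}[\alpha]], t[\mathsf{s}(t^{r}[\alpha])]$; $t^{\ell}[\alpha]\leadsto t[t^{\ell}[\alpha]], t[\mathsf{p}(t^{\ell}[\alpha])]$; $t[\alpha]\leadsto t[\mathsf{last}(t)]$. The saturation of a sample set is its closure under $\leadsto^{*}$ (reflexive transitive closure). For $p\in\overline\omega$: $p\ominus1=p-1$ if $p\in\omega\setminus\{0\}$, else $p$; $p\oplus1=p+1$ if $p\in\omega$, else $p$. For a saturated sample set $\Delta$, a $\Delta$-diagram is a map $\delta\colon\Delta\to\overline\omega$ such that (all samples mentioned belonging to $\Delta$): (S1) $\delta(\alpha)\le\delta(\beta)\Rightarrow\delta(t[\alpha])\le\delta(t[\beta])$; (S2) $\delta(\alpha)=0\Rightarrow\delta(t[\alpha])=0$; (S3) $\delta(\mathsf{p}(\alpha))=\delta(\alpha)\ominus1$; (S4) $\delta(\mathsf{s}(\alpha))=\delta(\alpha)\oplus1$;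 (S5) for $t[\alpha]\in\Delta$: $\delta(\mathsf{last}(t))\le\delta(\alpha)\iff\delta(t[\alpha])=\delta(t[\mathsf{last}(t)])$; (S6) $\delta(\mathsf{last}(t))=\omega\Rightarrow\delta(t[\mathsf{last}(t)])=\omega$; (L1) $\delta(\mathrm{id}[\alpha])=\delta(\alpha)$; (L2) if $\bot[\alpha]\in\Delta$ then $\delta(\mathsf{last}(\bot))=0$; (L3) $\delta((tu)[\alpha])=\delta(t[u[\alpha]])$; (L4) if $(tu)[\mathsf{last}(tu)]\in\Delta$ and $\delta(\mathsf{last}(tu))=\omega$ then $\delta(\mathsf{last}(t))=\delta(\mathsf{last}(u))=\omega$; (O1) $\delta(t^{o}[\alpha])\in\{0,\omega\}$; (O2) $\delta(\alpha)<\omega\Rightarrow(\delta(t^{o}[\alpha])=\omega\iff\delta(t[\alpha])=\omega)$; (O3) $\delta(\mathsf{last}(t^{o}))<\omega$; (O4) for $t[\alpha],t^{o}[\mathsf{last}(t^{o})]\in\Delta$: if $\delta(t^{o}[\mathsf{last}(t^{o})])<\omega$ and $\delta(\alpha)<\omega$ then $\delta(t[\alpha])<\omega$; (R1) $\delta(t[t^{r}[\alpha]])\le\delta(\alpha)$; (R2) for $t^{r}[\alpha]\in\Delta$: if $0<\delta(\alpha)<\omega$ and $\delta(t^{r}[\alpha])<\omega$ then $\delta(\alpha)<\delta(t[\mathsf{s}(t^{r}[\alpha])])$; (R3) for $t^{r}[\mathsf{last}(t^{r})]\in\Delta$: $\delta(\mathsf{last}(t^{r}))=\omega\Rightarrow\delta(\mathsf{last}(t))=\omega$;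 (R4) for $t^{r}[\mathsf{last}(t^{r})]\in\Delta$: $\delta(t^{r}[\mathsf{last}(t^{r})])<\omega\Rightarrow\delta(t[\mathsf{s}(t^{r}[\mathsf{last}(t^{r})])])=\omega$; (Λ1) for $t[t^{\ell}[\alpha]]\in\Delta$: $\delta(t^{\ell}[\alpha])<\omega\Rightarrow\delta(\alpha)\le\delta(t[t^{\ell}[\alpha]])$; (Λ2) for $t^{\ell}[\alpha]\in\Delta$: if $0<\delta(\alpha)<\omega$ and $\delta(t^{\ell}[\alpha])<\omega$ then $\delta(t[\mathsf{p}(t^{\ell}[\alpha])])<\delta(\alpha)$; (Λ3) for $t[t^{\ell}[\alpha]]\in\Delta$: if $\delta(\alpha)<\omega$ and $\delta(t^{\ell}[\alpha])=\omega$ then $\delta(t[t^{\ell}[\alpha]])<\delta(\alpha)$; (Λ4) for $t^{\ell}[\mathsf{last}(t^{\ell})]\in\Delta$: $\delta(\mathsf{last}(t^{\ell}))=\omega\Rightarrow\delta(\mathsf{last}(t))=\omega$; (Λ5) for $t^{\ell}[\mathsf{last}(t^{\ell})]\in\Delta$: $\delta(t^{\ell}[\mathsf{last}(t^{\ell})])<\omega\Rightarrow\delta(t[t^{\ell}[\mathsf{last}(t^{\ell})]])=\omega$. *)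

theory Defs
  imports Main "HOL-Library.Extended_Nat"
begin

text \<open>The ordinal omega-bar = omega + 1 is rendered as enat, with omega = \<infinity>.
  Functions enat => enat carry the pointwise order and pointwise Sup/sup.\<close>

definition timewarp :: "(enat \<Rightarrow> enat) \<Rightarrow> bool" where
  "timewarp f \<longleftrightarrow> mono f \<and> f 0 = 0 \<and> f \<infinity> = (SUP n. f (enat n))"

definition W :: "(enat \<Rightarrow> enat) set" where
  "W = {f. timewarp f}"

definition topW :: "enat \<Rightarrow> enat" where
  "topW p = (if p = 0 then 0 else \<infinity>)"

definition botW :: "enat \<Rightarrow> enat" where
  "botW p = 0"

text \<open>Residuals on W: f \<le> h / g iff f g \<le> h iff g \<le> f \ h (for f, g in W).
  They are given as the greatest elements of W with the respective property.\<close>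

definition ldiv :: "(enat \<Rightarrow> enat) \<Rightarrow> (enat \<Rightarrow> enat) \<Rightarrow> (enat \<Rightarrow> enat)" where
  "ldiv f h = Sup {g \<in> W. f \<circ> g \<le> h}"

definition rdiv :: "(enat \<Rightarrow> enat) \<Rightarrow> (enat \<Rightarrow> enat) \<Rightarrow> (enat \<Rightarrow> enat)" where
  "rdiv h g = Sup {f \<in> W. f \<circ> g \<le> h}"

definition lconj :: "(enat \<Rightarrow> enat) \<Rightarrow> (enat \<Rightarrow> enat)" where
  "lconj f = rdiv id f"

definition rconj :: "(enat \<Rightarrow> enat) \<Rightarrow> (enat \<Rightarrow> enat)" where
  "rconj f = ldiv f id"

definition oconj :: "(enat \<Rightarrow> enat) \<Rightarrow> (enat \<Rightarrow> enat)" where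
  "oconj f = ldiv topW f"

datatype 'v bterm =
    TVar 'v
  | TComp "'v bterm" "'v bterm"
  | TO "'v bterm"
  | TL "'v bterm"
  | TR "'v bterm"
  | TId
  | TBot

definition valuation :: "('v \<Rightarrow> (enat \<Rightarrow> enat)) \<Rightarrow> bool" where
  "valuation \<theta> \<longleftrightarrow> (\<forall>x. \<theta> x \<in> W)"

fun eval :: "('v \<Rightarrow> (enat \<Rightarrow> enat)) \<Rightarrow> 'v bterm \<Rightarrow> (enat \<Rightarrow> enat)" where
  "eval \<theta> (TVar x) = \<theta> x"
| "eval \<theta> (TComp t u) = eval \<theta> t \<circ> eval \<theta> u"
| "eval \<theta> (TO t) = oconj (eval \<theta> t)"
| "eval \<theta> (TL t) = lconj (eval \<theta> t)"
| "eval \<theta> (TR t) = rconj (eval \<theta> t)"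
| "eval \<theta> TId = id"
| "eval \<theta> TBot = botW"

datatype ('v, 'k) sample =
    SVar 'k
  | SApp "'v bterm" "('v, 'k) sample"
  | SS "('v, 'k) sample"
  | SP "('v, 'k) sample"
  | SLast "'v bterm"

inductive leads :: "('v, 'k) sample \<Rightarrow> ('v, 'k) sample \<Rightarrow> bool" where
  app_arg: "leads (SApp t a) a"
| s_arg: "leads (SS a) a"
| p_arg: "leads (SP a) a"
| comp: "leads (SApp (TComp t u) a) (SApp t (SApp u a))"
| o_un: "leads (SApp (TO t) a) (SApp t a)"
| r1: "leads (SApp (TR t) a) (SApp t (SApp (TR t) a))"
| r2: "leads (SApp (TR t) a) (SApp t (SS (SApp (TR t) a)))"
| l1: "leads (SApp (TL t) a) (SApp t (SApp (TL t) a))"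
| l2: "leads (SApp (TL t) a) (SApp t (SP (SApp (TL t) a)))"
| last: "leads (SApp t a) (SApp t (SLast t))"

definition saturation :: "('v, 'k) sample set \<Rightarrow> ('v, 'k) sample set" where
  "saturation A = {b. \<exists>a\<in>A. leads\<^sup>*\<^sup>* a b}"

definition ominus1 :: "enat \<Rightarrow> enat" where
  "ominus1 p = (if p \<noteq> 0 \<and> p \<noteq> \<infinity> then p - 1 else p)"

definition oplus1 :: "enat \<Rightarrow> enat" where
  "oplus1 p = (if p \<noteq> \<infinity> then p + 1 else p)"

text \<open>A Delta-diagram, with delta given as a total function whose values are only
  constrained on Delta; every condition is guarded by membership in Delta of all
  samples it mentions.\<close>

definition diagram :: "('v, 'k) sample set \<Rightarrow> (('v, 'k) sample \<Rightarrow> enat) \<Rightarrow> bool" where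
  "diagram D \<delta> \<longleftrightarrow>
   \<comment> \<open>S1\<close>
   (\<forall>t a b. a \<in> D \<and> b \<in> D \<and> SApp t a \<in> D \<and> SApp t b \<in> D \<longrightarrow>
      \<delta> a \<le> \<delta> b \<longrightarrow> \<delta> (SApp t a) \<le> \<delta> (SApp t b)) \<and>
   \<comment> \<open>S2\<close>
   (\<forall>t a. a \<in> D \<and> SApp t a \<in> D \<longrightarrow> \<delta> a = 0 \<longrightarrow> \<delta> (SApp t a) = 0) \<and>
   \<comment> \<open>S3\<close>
   (\<forall>a. a \<in> D \<and> SP a \<in> D \<longrightarrow> \<delta> (SP a) = ominus1 (\<delta> a)) \<and>
   \<comment> \<open>S4\<close>
   (\<forall>a. a \<in> D \<and> SS a \<in> D \<longrightarrow> \<delta> (SS a) = oplus1 (\<delta> a)) \<and>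
   \<comment> \<open>S5\<close>
   (\<forall>t a. a \<in> D \<and> SApp t a \<in> D \<and> SLast t \<in> D \<and> SApp t (SLast t) \<in> D \<longrightarrow>
      (\<delta> (SLast t) \<le> \<delta> a \<longleftrightarrow> \<delta> (SApp t a) = \<delta> (SApp t (SLast t)))) \<and>
   \<comment> \<open>S6\<close>
   (\<forall>t. SLast t \<in> D \<and> SApp t (SLast t) \<in> D \<longrightarrow>
      \<delta> (SLast t) = \<infinity> \<longrightarrow> \<delta> (SApp t (SLast t)) = \<infinity>) \<and>
   \<comment> \<open>L1\<close>
   (\<forall>a. a \<in> D \<and> SApp TId a \<in> D \<longrightarrow> \<delta> (SApp TId a) = \<delta> a) \<and>
   \<comment> \<open>L2\<close>
   (\<forall>a. SApp TBot a \<in> D \<and> SLast TBot \<in> D \<longrightarrow> \<delta> (SLast TBot) = 0) \<and>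
   \<comment> \<open>L3\<close>
   (\<forall>t u a. SApp (TComp t u) a \<in> D \<and> SApp t (SApp u a) \<in> D \<longrightarrow>
      \<delta> (SApp (TComp t u) a) = \<delta> (SApp t (SApp u a))) \<and>
   \<comment> \<open>L4\<close>
   (\<forall>t u. SApp (TComp t u) (SLast (TComp t u)) \<in> D \<and> SLast (TComp t u) \<in> D \<and>
          SLast t \<in> D \<and> SLast u \<in> D \<longrightarrow>
      \<delta> (SLast (TComp t u)) = \<infinity> \<longrightarrow> \<delta> (SLast t) = \<infinity> \<and> \<delta> (SLast u) = \<infinity>) \<and>
   \<comment> \<open>O1\<close>
   (\<forall>t a. SApp (TO t) a \<in> D \<longrightarrow> \<delta> (SApp (TO t) a) \<in> {0, \<infinity>}) \<and>
   \<comment> \<open>O2\<close>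
   (\<forall>t a. a \<in> D \<and> SApp (TO t) a \<in> D \<and> SApp t a \<in> D \<longrightarrow> \<delta> a < \<infinity> \<longrightarrow>
      (\<delta> (SApp (TO t) a) = \<infinity> \<longleftrightarrow> \<delta> (SApp t a) = \<infinity>)) \<and>
   \<comment> \<open>O3\<close>
   (\<forall>t. SLast (TO t) \<in> D \<longrightarrow> \<delta> (SLast (TO t)) < \<infinity>) \<and>
   \<comment> \<open>O4\<close>
   (\<forall>t a. a \<in> D \<and> SApp t a \<in> D \<and> SApp (TO t) (SLast (TO t)) \<in> D \<longrightarrow>
      \<delta> (SApp (TO t) (SLast (TO t))) < \<infinity> \<longrightarrow> \<delta> a < \<infinity> \<longrightarrow> \<delta> (SApp t a) < \<infinity>) \<and>
   \<comment> \<open>R1\<close>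
   (\<forall>t a. a \<in> D \<and> SApp t (SApp (TR t) a) \<in> D \<longrightarrow>
      \<delta> (SApp t (SApp (TR t) a)) \<le> \<delta> a) \<and>
   \<comment> \<open>R2\<close>
   (\<forall>t a. a \<in> D \<and> SApp (TR t) a \<in> D \<and> SApp t (SS (SApp (TR t) a)) \<in> D \<longrightarrow>
      0 < \<delta> a \<longrightarrow> \<delta> a < \<infinity> \<longrightarrow> \<delta> (SApp (TR t) a) < \<infinity> \<longrightarrow>
      \<delta> a < \<delta> (SApp t (SS (SApp (TR t) a)))) \<and>
   \<comment> \<open>R3\<close>
   (\<forall>t. SApp (TR t) (SLast (TR t)) \<in> D \<and> SLast (TR t) \<in> D \<and> SLast t \<in> D \<longrightarrow>
      \<delta> (SLast (TR t)) = \<infinity> \<longrightarrow> \<delta> (SLast t) = \<infinity>) \<and>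
   \<comment> \<open>R4\<close>
   (\<forall>t. SApp (TR t) (SLast (TR t)) \<in> D \<and> SApp t (SS (SApp (TR t) (SLast (TR t)))) \<in> D \<longrightarrow>
      \<delta> (SApp (TR t) (SLast (TR t))) < \<infinity> \<longrightarrow>
      \<delta> (SApp t (SS (SApp (TR t) (SLast (TR t))))) = \<infinity>) \<and>
   \<comment> \<open>\<Lambda>1\<close>
   (\<forall>t a. a \<in> D \<and> SApp t (SApp (TL t) a) \<in> D \<longrightarrow>
      \<delta> (SApp (TL t) a) < \<infinity> \<longrightarrow> \<delta> a \<le> \<delta> (SApp t (SApp (TL t) a))) \<and>
   \<comment> \<open>\<Lambda>2\<close>
   (\<forall>t a. a \<in> D \<and> SApp (TL t) a \<in> D \<and> SApp t (SP (SApp (TL t) a)) \<in> D \<longrightarrow>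
      0 < \<delta> a \<longrightarrow> \<delta> a < \<infinity> \<longrightarrow> \<delta> (SApp (TL t) a) < \<infinity> \<longrightarrow>
      \<delta> (SApp t (SP (SApp (TL t) a))) < \<delta> a) \<and>
   \<comment> \<open>\<Lambda>3\<close>
   (\<forall>t a. a \<in> D \<and> SApp (TL t) a \<in> D \<and> SApp t (SApp (TL t) a) \<in> D \<longrightarrow>
      \<delta> a < \<infinity> \<longrightarrow> \<delta> (SApp (TL t) a) = \<infinity> \<longrightarrow> \<delta> (SApp t (SApp (TL t) a)) < \<delta> a) \<and>
   \<comment> \<open>\<Lambda>4\<close>
   (\<forall>t. SApp (TL t) (SLast (TL t)) \<in> D \<and> SLast (TL t) \<in> D \<and> SLast t \<in> D \<longrightarrow>
      \<delta> (SLast (TL t)) = \<infinity> \<longrightarrow> \<delta> (SLast t) = \<infinity>) \<and>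
   \<comment> \<open>\<Lambda>5\<close>
   (\<forall>t. SApp (TL t) (SLast (TL t)) \<in> D \<and> SApp t (SApp (TL t) (SLast (TL t))) \<in> D \<longrightarrow>
      \<delta> (SApp (TL t) (SLast (TL t))) < \<infinity> \<longrightarrow>
      \<delta> (SApp t (SApp (TL t) (SLast (TL t)))) = \<infinity>)"

end

theory Submission
  imports Defs "HOL-Library.Sublist"
begin

(* Evaluating every sample under a valuation theta at a point p gives a diagram: the diagram
   conditions are exactly the behaviour of composition, of the three conjugates and of last
   points of time warps, so a counter-model yields a diagram with delta(t_i[kappa]) < delta(kappa).
   Conversely, the saturation is finite, since nested applications in reachable samples follow
   the postorder of the terms.  From a diagram on it one reads off a valuation, interpolating
   each variable monotonically through the prescribed values; induction on terms shows that
   every t[alpha] then evaluates to delta(t[alpha]).  The conjugates are determined at finite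
   nonzero arguments by their Galois properties and at omega by the conditions on last points. *)

lemma enat_eq_infinityI:
  assumes "\<And>n. enat n \<le> x"
  shows "x = \<infinity>"
proof (cases x)
  case (enat m)
  then have "enat (Suc m) \<le> enat m" using assms by simp
  then show ?thesis by simp
qed simp

lemma less_eSuc_imp_le:
  assumes "x < eSuc q"
  shows "x \<le> (q::enat)"
proof (rule ccontr)
  assume "\<not> x \<le> q"
  then have "eSuc q \<le> x" by (simp add: ileI1)
  then show False using assms by simp
qed

lemma Sup_enat_attained: "(A::enat set) \<noteq> {} \<Longrightarrow> Sup A \<noteq> \<infinity> \<Longrightarrow> Sup A \<in> A"
  unfolding Sup_enat_def by (auto split: if_splits intro: Max_in)

lemma finite_Sup_enat_neq_infinity:
  assumes "finite (A::enat set)" "\<infinity> \<notin> A"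
  shows "Sup A \<noteq> \<infinity>"
proof (cases "A = {}")
  case False
  then have "Sup A \<in> A" using assms(1) by (simp add: Sup_enat_def Max_in)
  show ?thesis
  proof
    assume "Sup A = \<infinity>"
    then show False using \<open>Sup A \<in> A\<close> assms(2) by simp
  qed
qed (simp add: bot_enat_def)

lemma enat_diff_right_mono: "p \<le> q \<Longrightarrow> p - c \<le> q - (c::enat)"
  by (cases p; cases q; cases c) auto

lemma oplus1_eq_eSuc [simp]: "oplus1 p = eSuc p"
  by (simp add: oplus1_def eSuc_plus_1)

lemma ominus1_eq_minus_1 [simp]: "ominus1 p = p - 1"
  by (cases p) (auto simp: ominus1_def)

lemma W_iff: "f \<in> W \<longleftrightarrow> mono f \<and> f 0 = 0 \<and> f \<infinity> = (SUP n. f (enat n))"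
  by (simp add: W_def timewarp_def)

lemma WI: "mono f \<Longrightarrow> f 0 = 0 \<Longrightarrow> f \<infinity> = (SUP n. f (enat n)) \<Longrightarrow> f \<in> W"
  by (simp add: W_iff)

lemma W_monoD: "f \<in> W \<Longrightarrow> a \<le> b \<Longrightarrow> f a \<le> f b"
  by (simp add: W_iff monoD)

lemma W_zero [simp]: "f \<in> W \<Longrightarrow> f 0 = 0"
  by (simp add: W_iff)

lemma W_infinity: "f \<in> W \<Longrightarrow> f \<infinity> = (SUP n. f (enat n))"
  by (simp add: W_iff)

lemma W_attains_finite_limit:
  assumes f: "f \<in> W" and fin: "f \<infinity> \<noteq> \<infinity>"
  shows "\<exists>n. f (enat n) = f \<infinity>"
proof -
  have "Sup (range (\<lambda>n. f (enat n))) \<in> range (\<lambda>n. f (enat n))"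
    using fin W_infinity[OF f] by (intro Sup_enat_attained) auto
  then show ?thesis using W_infinity[OF f] by auto
qed

lemma W_unbounded: "f \<in> W \<Longrightarrow> f \<infinity> = \<infinity> \<Longrightarrow> a < \<infinity> \<Longrightarrow> \<exists>n. a < f (enat n)"
  by (metis W_infinity less_SUP_iff)

lemma W_Sup_le:
  assumes f: "f \<in> W"
  shows "f (Sup S) \<le> (SUP s\<in>S. f s)"
proof (cases "S = {}")
  case True
  then show ?thesis using f by (simp add: bot_enat_def)
next
  case False
  show ?thesis
  proof (cases "Sup S \<in> S")
    case True
    then show ?thesis by (rule SUP_upper)
  next
    case not_attained: False
    then have inf: "Sup S = \<infinity>" using Sup_enat_attained[OF False] by (cases "Sup S") auto
    have "f (enat n) \<le> (SUP s\<in>S. f s)" for n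
    proof -
      have "enat n < Sup S" using inf by simp
      then obtain s where "s \<in> S" "enat n < s" using less_Sup_iff by blast
      then have "f (enat n) \<le> f s" using W_monoD[OF f] by simp
      also have "\<dots> \<le> (SUP s\<in>S. f s)" using \<open>s \<in> S\<close> by (rule SUP_upper)
      finally show ?thesis .
    qed
    then show ?thesis using inf W_infinity[OF f] by (simp add: SUP_le_iff)
  qed
qed

lemma W_infinity_eqI:
  assumes g: "g \<in> W"
    and upper: "V \<noteq> \<infinity> \<Longrightarrow> g \<infinity> \<le> V"
    and at_L: "L \<noteq> \<infinity> \<Longrightarrow> g L = V"
    and unbounded: "L = \<infinity> \<Longrightarrow> g \<infinity> = \<infinity>"
  shows "g \<infinity> = V"
proof (cases "L = \<infinity>")
  case True
  then show ?thesis using unbounded upper by (cases "V = \<infinity>") auto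
next
  case False
  then have "V \<le> g \<infinity>" using at_L W_monoD[OF g, of L \<infinity>] by simp
  then show ?thesis using upper by (cases "V = \<infinity>") auto
qed

lemma Sup_in_W: "F \<subseteq> W \<Longrightarrow> Sup F \<in> W"
proof (rule WI)
  assume F: "F \<subseteq> W"
  show "mono (Sup F)"
  proof (rule monoI)
    fix x y :: enat assume "x \<le> y"
    then show "Sup F x \<le> Sup F y" using F unfolding Sup_apply
      by (intro SUP_mono) (auto intro: W_monoD)
  qed
  show "Sup F 0 = 0" unfolding Sup_apply using F
    by (cases "F = {}") (auto simp: bot_enat_def intro!: SUP_eq_const)
  have "Sup F \<infinity> = (SUP f\<in>F. SUP n. f (enat n))"
    using F by (auto simp: Sup_apply W_infinity intro!: SUP_cong)
  also have "\<dots> = (SUP n. SUP f\<in>F. f (enat n))" by (rule SUP_commute)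
  finally show "Sup F \<infinity> = (SUP n. Sup F (enat n))" by (simp add: Sup_apply)
qed

lemma comp_in_W:
  assumes f: "f \<in> W" and g: "g \<in> W"
  shows "f \<circ> g \<in> W"
proof (rule WI)
  show "mono (f \<circ> g)" using W_monoD[OF f] W_monoD[OF g] by (simp add: monoI)
  show "(f \<circ> g) 0 = 0" using f g by simp
  show "(f \<circ> g) \<infinity> = (SUP n. (f \<circ> g) (enat n))"
  proof (rule antisym)
    show "(SUP n. (f \<circ> g) (enat n)) \<le> (f \<circ> g) \<infinity>"
      using W_monoD[OF f] W_monoD[OF g] by (simp add: SUP_least)
    show "(f \<circ> g) \<infinity> \<le> (SUP n. (f \<circ> g) (enat n))"
    proof (cases "g \<infinity> = \<infinity>")
      case True
      have "f (enat m) \<le> (SUP n. (f \<circ> g) (enat n))" for m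
      proof -
        obtain n where "enat m < g (enat n)" using W_unbounded[OF g True] by auto
        then have "f (enat m) \<le> (f \<circ> g) (enat n)" using W_monoD[OF f] by simp
        also have "\<dots> \<le> (SUP n. (f \<circ> g) (enat n))" by (rule SUP_upper) simp
        finally show ?thesis .
      qed
      then show ?thesis using True W_infinity[OF f] by (simp add: SUP_le_iff)
    next
      case False
      then obtain n where "g (enat n) = g \<infinity>" using W_attains_finite_limit[OF g] by blast
      then have "(f \<circ> g) \<infinity> = (f \<circ> g) (enat n)" by simp
      also have "\<dots> \<le> (SUP n. (f \<circ> g) (enat n))" by (rule SUP_upper) simp
      finally show ?thesis .
    qed
  qed
qed

lemma id_in_W: "id \<in> W"
proof (rule WI)
  have "enat k \<le> (SUP n. id (enat n))" for k
    using SUP_upper[of k UNIV "\<lambda>n. id (enat n)"] by simp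
  then have "(SUP n. id (enat n)) = \<infinity>" by (rule enat_eq_infinityI)
  then show "id \<infinity> = (SUP n. id (enat n))" by simp
qed (auto simp: mono_def)

lemma botW_in_W: "botW \<in> W"
  by (rule WI) (auto simp: botW_def mono_def)

lemma topW_in_W: "topW \<in> W"
proof (rule WI)
  have "topW (enat 1) \<le> (SUP n. topW (enat n))" by (rule SUP_upper) simp
  then show "topW \<infinity> = (SUP n. topW (enat n))" by (simp add: topW_def zero_enat_def)
qed (auto simp: mono_def topW_def)

lemma ldiv_in_W: "ldiv f h \<in> W"
  unfolding ldiv_def by (rule Sup_in_W) auto

lemma rdiv_in_W: "rdiv h g \<in> W"
  unfolding rdiv_def by (rule Sup_in_W) auto

lemma ldiv_greatest: "g \<in> W \<Longrightarrow> f \<circ> g \<le> h \<Longrightarrow> g \<le> ldiv f h"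
  unfolding ldiv_def by (rule Sup_upper) auto

lemma rdiv_greatest: "f \<in> W \<Longrightarrow> f \<circ> g \<le> h \<Longrightarrow> f \<le> rdiv h g"
  unfolding rdiv_def by (rule Sup_upper) auto

lemma ldiv_cancel:
  assumes f: "f \<in> W"
  shows "f (ldiv f h p) \<le> h p"
proof -
  let ?G = "{g \<in> W. f \<circ> g \<le> h}"
  have "f (ldiv f h p) = f (Sup ((\<lambda>g. g p) ` ?G))"
    by (simp add: ldiv_def Sup_apply)
  also have "\<dots> \<le> (SUP s\<in>(\<lambda>g. g p) ` ?G. f s)" by (rule W_Sup_le[OF f])
  also have "\<dots> \<le> h p" by (auto intro!: SUP_least simp: le_fun_def)
  finally show ?thesis .
qed

lemma rdiv_cancel: "rdiv h g (g p) \<le> h p"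
  unfolding rdiv_def Sup_apply by (auto intro!: SUP_least simp: le_fun_def)

definition jump :: "enat \<Rightarrow> enat \<Rightarrow> enat \<Rightarrow> enat" where
  "jump a m p = (if p < a then 0 else m)"

lemma jump_in_W:
  assumes "a \<noteq> 0" "a \<noteq> \<infinity>"
  shows "jump a m \<in> W"
proof (rule WI)
  obtain k where k: "a = enat k" using assms by auto
  have "(SUP n. jump a m (enat n)) = m"
  proof (rule antisym)
    show "(SUP n. jump a m (enat n)) \<le> m" by (rule SUP_least) (simp add: jump_def)
    have "jump a m (enat k) \<le> (SUP n. jump a m (enat n))" by (rule SUP_upper) simp
    then show "m \<le> (SUP n. jump a m (enat n))" by (simp add: jump_def k)
  qed
  then show "jump a m \<infinity> = (SUP n. jump a m (enat n))" by (simp add: jump_def)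
qed (use assms in \<open>auto simp: mono_def jump_def\<close>)

section \<open>Last points\<close>

definition last_point :: "(enat \<Rightarrow> enat) \<Rightarrow> enat" where
  "last_point f = (LEAST q. f q = f \<infinity>)"

lemma last_point_value: "f (last_point f) = f \<infinity>"
  unfolding last_point_def by (rule LeastI[of _ \<infinity>]) simp

lemma last_point_le: "f q = f \<infinity> \<Longrightarrow> last_point f \<le> q"
  unfolding last_point_def by (rule Least_le)

lemma last_point_eq_infinity_iff: "last_point f = \<infinity> \<longleftrightarrow> (\<forall>n. f (enat n) \<noteq> f \<infinity>)"
proof
  assume lp: "last_point f = \<infinity>"
  show "\<forall>n. f (enat n) \<noteq> f \<infinity>"
  proof (intro allI notI)
    fix n assume "f (enat n) = f \<infinity>"
    then have "last_point f \<le> enat n" by (rule last_point_le)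
    then show False using lp by simp
  qed
next
  assume "\<forall>n. f (enat n) \<noteq> f \<infinity>"
  then show "last_point f = \<infinity>" using last_point_value[of f] by (cases "last_point f") auto
qed

lemma W_last_point_eq_infinity_iff:
  assumes f: "f \<in> W"
  shows "last_point f = \<infinity> \<longleftrightarrow> (\<forall>n. f (enat n) < f \<infinity>)"
proof -
  have "f (enat n) \<le> f \<infinity>" for n using W_monoD[OF f] by simp
  then show ?thesis unfolding last_point_eq_infinity_iff by (simp add: less_le)
qed

lemma last_point_le_iff:
  assumes f: "f \<in> W"
  shows "last_point f \<le> a \<longleftrightarrow> f a = f (last_point f)"
proof
  assume "last_point f \<le> a"
  then have "f (last_point f) \<le> f a" "f a \<le> f \<infinity>" using W_monoD[OF f] by auto
  then show "f a = f (last_point f)" using last_point_value[of f] by simp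
next
  assume "f a = f (last_point f)"
  then show "last_point f \<le> a" by (simp add: last_point_le last_point_value)
qed

lemma W_infinity_if_last_point_infinite: "f \<in> W \<Longrightarrow> last_point f = \<infinity> \<Longrightarrow> f \<infinity> = \<infinity>"
  using W_attains_finite_limit last_point_eq_infinity_iff by blast

lemma last_point_botW: "last_point botW = 0"
  using last_point_le[of botW 0] by (simp add: botW_def)

lemma last_point_comp_eq_infinity_iff:
  assumes f: "f \<in> W" and g: "g \<in> W"
  shows "last_point (f \<circ> g) = \<infinity> \<longleftrightarrow> last_point f = \<infinity> \<and> last_point g = \<infinity>"
proof
  assume fg: "last_point (f \<circ> g) = \<infinity>"
  then have "last_point g = \<infinity>"
    unfolding last_point_eq_infinity_iff by (metis comp_apply)
  moreover have "last_point f = \<infinity>"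
  proof (rule ccontr)
    assume "last_point f \<noteq> \<infinity>"
    then obtain m where m: "f (enat m) = f \<infinity>" unfolding last_point_eq_infinity_iff by blast
    obtain n where "f (g (enat n)) = f (g \<infinity>)"
    proof (cases "g \<infinity> = \<infinity>")
      case True
      then obtain n where "enat m < g (enat n)" using W_unbounded[OF g True, of "enat m"] by auto
      then have "f (g (enat n)) = f \<infinity>"
        using W_monoD[OF f, of "enat m" "g (enat n)"] W_monoD[OF f, of "g (enat n)" \<infinity>] m by simp
      then show ?thesis using that True by simp
    next
      case False
      then obtain n where "g (enat n) = g \<infinity>" using W_attains_finite_limit[OF g] by blast
      then show ?thesis using that[of n] by simp
    qed
    then show False using fg unfolding last_point_eq_infinity_iff by auto
  qed
  ultimately show "last_point f = \<infinity> \<and> last_point g = \<infinity>" by blast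
next
  assume "last_point f = \<infinity> \<and> last_point g = \<infinity>"
  then have f_less: "f (enat k) < f \<infinity>" and g_less: "g (enat k) < g \<infinity>"
    and g_inf: "g \<infinity> = \<infinity>" for k
    using W_last_point_eq_infinity_iff[OF f] W_last_point_eq_infinity_iff[OF g]
      W_infinity_if_last_point_infinite[OF g] by auto
  have "(f \<circ> g) (enat n) \<noteq> (f \<circ> g) \<infinity>" for n
    using g_less[of n] f_less g_inf by (cases "g (enat n)") (auto simp: less_imp_neq)
  then show "last_point (f \<circ> g) = \<infinity>" unfolding last_point_eq_infinity_iff by blast
qed

section \<open>Conjugates\<close>

lemma rconj_in_W: "rconj f \<in> W"
  unfolding rconj_def by (rule ldiv_in_W)

lemma rconj_cancel: "f \<in> W \<Longrightarrow> f (rconj f a) \<le> a"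
  unfolding rconj_def using ldiv_cancel[of f id a] by simp

lemma rconj_mono: "a \<le> b \<Longrightarrow> rconj f a \<le> rconj f b"
  by (rule W_monoD[OF rconj_in_W])

lemma le_rconj_iff:
  assumes f: "f \<in> W" and a: "a \<noteq> 0" "a \<noteq> \<infinity>"
  shows "q \<le> rconj f a \<longleftrightarrow> f q \<le> a"
proof
  assume "q \<le> rconj f a"
  then show "f q \<le> a" using W_monoD[OF f] rconj_cancel[OF f, of a] order_trans by blast
next
  assume q: "f q \<le> a"
  have "f \<circ> jump a q \<le> id" using f q by (auto simp: le_fun_def jump_def)
  then have "jump a q \<le> rconj f" unfolding rconj_def by (intro ldiv_greatest jump_in_W a)
  then have "jump a q a \<le> rconj f a" by (simp add: le_fun_def)
  then show "q \<le> rconj f a" by (simp add: jump_def)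
qed

lemma rconj_eqI:
  assumes f: "f \<in> W" and a: "a \<noteq> 0" "a \<noteq> \<infinity>" and q: "f q \<le> a" "a < f (eSuc q)"
  shows "rconj f a = q"
proof (rule antisym)
  show "q \<le> rconj f a" using q(1) le_rconj_iff[OF f a] by simp
  have "\<not> eSuc q \<le> rconj f a" using q(2) le_rconj_iff[OF f a] by (simp add: not_le)
  then show "rconj f a \<le> q" by (simp add: not_le less_eSuc_imp_le)
qed

lemma rconj_eq_infinity: "f \<in> W \<Longrightarrow> a \<noteq> 0 \<Longrightarrow> a \<noteq> \<infinity> \<Longrightarrow> f \<infinity> \<le> a \<Longrightarrow> rconj f a = \<infinity>"
  using le_rconj_iff[of f a \<infinity>] by simp

lemma less_apply_eSuc_rconj:
  assumes f: "f \<in> W" and a: "0 < a" "a < \<infinity>" and q: "rconj f a < \<infinity>"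
  shows "a < f (eSuc (rconj f a))"
proof (rule ccontr)
  assume "\<not> a < f (eSuc (rconj f a))"
  then have "eSuc (rconj f a) \<le> rconj f a" using le_rconj_iff[OF f] a by simp
  then show False using q by (cases "rconj f a") (auto simp: eSuc_enat)
qed

lemma le_rconj_infinity:
  assumes f: "f \<in> W" and "f q \<noteq> \<infinity>"
  shows "q \<le> rconj f \<infinity>"
proof -
  have "q \<le> rconj f (max (f q) 1)"
    using assms by (subst le_rconj_iff[OF f]) (auto simp: max_def one_enat_def zero_enat_def)
  also have "\<dots> \<le> rconj f \<infinity>" by (rule rconj_mono) simp
  finally show ?thesis .
qed

lemma rconj_infinity_le:
  assumes f: "f \<in> W" and "f (eSuc q) = \<infinity>"
  shows "rconj f \<infinity> \<le> q"
proof -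
  have "\<not> eSuc q \<le> rconj f (enat n)" for n
  proof
    assume "eSuc q \<le> rconj f (enat n)"
    then have "f (eSuc q) \<le> enat n" using W_monoD[OF f] rconj_cancel[OF f] order_trans by blast
    then show False using assms(2) by simp
  qed
  then have "rconj f (enat n) \<le> q" for n by (simp add: not_le less_eSuc_imp_le)
  then show ?thesis using W_infinity[OF rconj_in_W, of f] by (simp add: SUP_le_iff)
qed

lemma apply_eSuc_rconj_infinity:
  assumes f: "f \<in> W" and "rconj f \<infinity> \<noteq> \<infinity>"
  shows "f (eSuc (rconj f \<infinity>)) = \<infinity>"
proof (rule ccontr)
  assume "f (eSuc (rconj f \<infinity>)) \<noteq> \<infinity>"
  then have "eSuc (rconj f \<infinity>) \<le> rconj f \<infinity>" by (rule le_rconj_infinity[OF f])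
  then show False using assms(2) by (cases "rconj f \<infinity>") (auto simp: eSuc_enat)
qed

lemma last_point_eq_infinity_if_rconj:
  assumes f: "f \<in> W" and rf: "last_point (rconj f) = \<infinity>"
  shows "last_point f = \<infinity>"
proof (rule ccontr)
  assume "last_point f \<noteq> \<infinity>"
  then obtain m where m: "f (enat m) = f \<infinity>" unfolding last_point_eq_infinity_iff by blast
  obtain n where "rconj f (enat n) = rconj f \<infinity>"
  proof (cases "f \<infinity> = \<infinity>")
    case True
    have "f (eSuc (enat m)) = \<infinity>" using W_monoD[OF f, of "enat m" "eSuc (enat m)"] m True by simp
    then have "rconj f \<infinity> \<le> enat m" by (rule rconj_infinity_le[OF f])
    then have "rconj f \<infinity> \<noteq> \<infinity>" by (cases "rconj f \<infinity>") auto
    then show ?thesis using that W_attains_finite_limit[OF rconj_in_W] by blast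
  next
    case False
    then obtain c where c: "f \<infinity> = enat c" by auto
    have "rconj f (enat (Suc c)) = \<infinity>"
      using c by (intro rconj_eq_infinity[OF f]) (auto simp: zero_enat_def)
    moreover have "rconj f (enat (Suc c)) \<le> rconj f \<infinity>" by (rule rconj_mono) simp
    ultimately show ?thesis using that[of "Suc c"] by simp
  qed
  then show False using rf last_point_eq_infinity_iff by blast
qed

lemma last_point_rconj_eq_infinity:
  assumes f: "f \<in> W" and "last_point f = \<infinity>"
  shows "last_point (rconj f) = \<infinity>"
proof -
  from assms(2) have f_less: "f (enat k) < f \<infinity>" and f_inf: "f \<infinity> = \<infinity>" for k
    using W_last_point_eq_infinity_iff[OF f] W_infinity_if_last_point_infinite[OF f] by auto
  have "enat k \<le> rconj f \<infinity>" for k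
    using le_rconj_infinity[OF f] f_less[of k] f_inf by simp
  then have "rconj f \<infinity> = \<infinity>" by (rule enat_eq_infinityI)
  moreover have "rconj f (enat n) \<noteq> \<infinity>" for n
  proof
    assume "rconj f (enat n) = \<infinity>"
    then show False using rconj_cancel[OF f, of "enat n"] f_inf by simp
  qed
  ultimately show ?thesis unfolding last_point_eq_infinity_iff by simp
qed

lemma lconj_in_W: "lconj f \<in> W"
  unfolding lconj_def by (rule rdiv_in_W)

lemma lconj_cancel: "lconj f (f q) \<le> q"
  unfolding lconj_def using rdiv_cancel[of id f q] by simp

lemma lconj_mono: "a \<le> b \<Longrightarrow> lconj f a \<le> lconj f b"
  by (rule W_monoD[OF lconj_in_W])

lemma eSuc_le_lconj:
  assumes f: "f \<in> W" and a: "a \<noteq> 0" "a \<noteq> \<infinity>" and q: "f q < a"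
  shows "eSuc q \<le> lconj f a"
proof -
  have "jump a (eSuc q) \<circ> f \<le> id"
  proof (rule le_funI)
    fix p
    show "(jump a (eSuc q) \<circ> f) p \<le> id p"
    proof (cases "f p < a")
      case False
      then have "q < p" using q W_monoD[OF f, of p q] by (meson le_less_trans not_le)
      then show ?thesis using False by (simp add: jump_def ileI1)
    qed (simp add: jump_def)
  qed
  then have "jump a (eSuc q) \<le> lconj f" unfolding lconj_def by (intro rdiv_greatest jump_in_W a)
  then have "jump a (eSuc q) a \<le> lconj f a" by (simp add: le_fun_def)
  then show ?thesis by (simp add: jump_def)
qed

lemma lconj_eqI:
  assumes f: "f \<in> W" and a: "a \<noteq> 0" "a \<noteq> \<infinity>" and q: "a \<le> f q" "f (q - 1) < a"
  shows "lconj f a = q"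
proof (rule antisym)
  show "lconj f a \<le> q" using q(1) lconj_mono lconj_cancel order_trans by blast
  have "q \<noteq> 0" using q(1) a f by auto
  then have "eSuc (q - 1) = q" by (cases q) (auto simp: eSuc_enat one_enat_def zero_enat_def)
  then show "q \<le> lconj f a" using eSuc_le_lconj[OF f a q(2)] by simp
qed

lemma lconj_eq_infinity: "f \<in> W \<Longrightarrow> a \<noteq> 0 \<Longrightarrow> a \<noteq> \<infinity> \<Longrightarrow> f \<infinity> < a \<Longrightarrow> lconj f a = \<infinity>"
  using eSuc_le_lconj[of f a \<infinity>] by simp

lemma le_apply_lconj:
  assumes f: "f \<in> W" and q: "lconj f a \<noteq> \<infinity>"
  shows "a \<le> f (lconj f a)"
proof (rule ccontr)
  let ?q = "lconj f a"
  assume "\<not> a \<le> f ?q"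
  then have less: "f ?q < a" by simp
  then obtain i where i: "f ?q = enat i" by (cases "f ?q") auto
  have "eSuc ?q \<le> lconj f (enat (Suc i))"
    using i by (intro eSuc_le_lconj[OF f]) (auto simp: zero_enat_def)
  also have "\<dots> \<le> ?q" using less i by (intro lconj_mono) (simp add: ileI1 eSuc_enat[symmetric])
  finally show False using q by (cases ?q) (auto simp: eSuc_enat)
qed

lemma apply_lconj_minus_1_less:
  assumes f: "f \<in> W" and a: "0 < a" "a < \<infinity>" and q: "lconj f a < \<infinity>"
  shows "f (lconj f a - 1) < a"
proof (rule ccontr)
  obtain k where k: "lconj f a = enat k" using q by auto
  have ak: "a \<le> f (enat k)" using le_apply_lconj[OF f, of a] k by simp
  have "k \<noteq> 0"
  proof
    assume "k = 0"
    then have "a \<le> 0" using ak f by (simp add: zero_enat_def[symmetric])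
    then show False using a by simp
  qed
  assume "\<not> f (lconj f a - 1) < a"
  then have "a \<le> f (enat (k - 1))" using k by (simp add: not_less one_enat_def)
  then have "lconj f a \<le> enat (k - 1)" using lconj_mono lconj_cancel order_trans by blast
  then show False using k \<open>k \<noteq> 0\<close> by simp
qed

lemma lconj_eq_infinity_imp_less:
  assumes f: "f \<in> W" and a: "a < \<infinity>" "lconj f a = \<infinity>"
  shows "f \<infinity> < a"
proof (rule ccontr)
  assume "\<not> f \<infinity> < a"
  obtain n where n: "a \<le> f (enat n)"
  proof (cases "f \<infinity> = \<infinity>")
    case True
    then obtain n where "a < f (enat n)" using W_unbounded[OF f True a(1)] by auto
    then show ?thesis using that[of n] by simp
  next
    case False
    then obtain n where "f (enat n) = f \<infinity>" using W_attains_finite_limit[OF f] by blast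
    then show ?thesis using that[of n] \<open>\<not> f \<infinity> < a\<close> by simp
  qed
  then have "lconj f a \<le> enat n" using lconj_mono lconj_cancel order_trans by blast
  then show False using a by simp
qed

lemma apply_lconj_infinity:
  "f \<in> W \<Longrightarrow> lconj f \<infinity> \<noteq> \<infinity> \<Longrightarrow> f (lconj f \<infinity>) = \<infinity>"
  using le_apply_lconj[of f \<infinity>] by simp

lemma last_point_eq_infinity_if_lconj:
  assumes f: "f \<in> W" and lf: "last_point (lconj f) = \<infinity>"
  shows "last_point f = \<infinity>"
proof (rule ccontr)
  assume "last_point f \<noteq> \<infinity>"
  then obtain m where m: "f (enat m) = f \<infinity>" unfolding last_point_eq_infinity_iff by blast
  obtain n where "lconj f (enat n) = lconj f \<infinity>"
  proof (cases "f \<infinity> = \<infinity>")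
    case True
    then have "lconj f \<infinity> \<le> enat m" using lconj_cancel[of f "enat m"] m by simp
    then have "lconj f \<infinity> \<noteq> \<infinity>" by (cases "lconj f \<infinity>") auto
    then show ?thesis using that W_attains_finite_limit[OF lconj_in_W] by blast
  next
    case False
    then obtain c where c: "f \<infinity> = enat c" by auto
    have "lconj f (enat (Suc c)) = \<infinity>"
      using c by (intro lconj_eq_infinity[OF f]) (auto simp: zero_enat_def)
    moreover have "lconj f (enat (Suc c)) \<le> lconj f \<infinity>" by (rule lconj_mono) simp
    ultimately show ?thesis using that[of "Suc c"] by simp
  qed
  then show False using lf last_point_eq_infinity_iff by blast
qed

lemma last_point_lconj_eq_infinity:
  assumes f: "f \<in> W" and "last_point f = \<infinity>"
  shows "last_point (lconj f) = \<infinity>"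
proof -
  from assms(2) have f_less: "f (enat k) < f \<infinity>" and f_inf: "f \<infinity> = \<infinity>" for k
    using W_last_point_eq_infinity_iff[OF f] W_infinity_if_last_point_infinite[OF f] by auto
  have "enat k \<le> lconj f \<infinity>" for k
  proof -
    obtain i where i: "f (enat k) = enat i" using f_less[of k] f_inf by auto
    have "enat k \<le> eSuc (enat k)" by simp
    also have "\<dots> \<le> lconj f (enat (Suc i))"
      using i by (intro eSuc_le_lconj[OF f]) (auto simp: zero_enat_def)
    also have "\<dots> \<le> lconj f \<infinity>" by (rule lconj_mono) simp
    finally show ?thesis .
  qed
  then have "lconj f \<infinity> = \<infinity>" by (rule enat_eq_infinityI)
  moreover have "lconj f (enat n) \<noteq> \<infinity>" for n
  proof -
    obtain m where "enat n < f (enat m)" using W_unbounded[OF f f_inf, of "enat n"] by auto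
    then have "lconj f (enat n) \<le> enat m"
      using lconj_mono lconj_cancel order_trans less_imp_le by metis
    then show ?thesis by (cases "lconj f (enat n)") auto
  qed
  ultimately show ?thesis unfolding last_point_eq_infinity_iff by simp
qed

lemma oconj_in_W: "oconj f \<in> W"
  unfolding oconj_def by (rule ldiv_in_W)

lemma oconj_finite:
  assumes f: "f \<in> W" and p: "p \<noteq> \<infinity>"
  shows "oconj f p = (if f p = \<infinity> then \<infinity> else 0)"
proof (cases "f p = \<infinity>")
  case True
  then have "p \<noteq> 0" using f by auto
  have "topW \<circ> jump p \<infinity> \<le> f"
  proof (rule le_funI)
    fix r
    show "(topW \<circ> jump p \<infinity>) r \<le> f r"
      using True W_monoD[OF f, of p r] by (cases "r < p") (auto simp: jump_def topW_def)
  qed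
  then have "jump p \<infinity> \<le> oconj f" unfolding oconj_def by (intro ldiv_greatest jump_in_W \<open>p \<noteq> 0\<close> p)
  then have "jump p \<infinity> p \<le> oconj f p" by (simp add: le_fun_def)
  then show ?thesis using True by (simp add: jump_def)
next
  case False
  have "topW (oconj f p) \<le> f p"
    unfolding oconj_def using ldiv_cancel[OF topW_in_W] by simp
  then show ?thesis using False by (auto simp: topW_def split: if_splits)
qed

lemma oconj_infinity:
  assumes f: "f \<in> W"
  shows "oconj f \<infinity> = (if \<exists>n. f (enat n) = \<infinity> then \<infinity> else 0)"
proof (cases "\<exists>n. f (enat n) = \<infinity>")
  case True
  then obtain n where "f (enat n) = \<infinity>" by auto
  then have "oconj f (enat n) = \<infinity>" using oconj_finite[OF f] by simp
  moreover have "oconj f (enat n) \<le> oconj f \<infinity>" by (rule W_monoD[OF oconj_in_W]) simp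
  ultimately show ?thesis using True by simp
next
  case False
  then have "oconj f (enat n) = 0" for n using oconj_finite[OF f] by simp
  then show ?thesis using W_infinity[OF oconj_in_W, of f] False by simp
qed

lemma oconj_values: "f \<in> W \<Longrightarrow> oconj f p = 0 \<or> oconj f p = \<infinity>"
  by (cases "p = \<infinity>") (auto simp: oconj_infinity oconj_finite)

lemma last_point_oconj_finite: "f \<in> W \<Longrightarrow> last_point (oconj f) \<noteq> \<infinity>"
  unfolding last_point_eq_infinity_iff using oconj_finite oconj_infinity
  by (metis enat.distinct(2))

lemma oconj_infinity_finite_imp_finite:
  "f \<in> W \<Longrightarrow> oconj f \<infinity> \<noteq> \<infinity> \<Longrightarrow> p \<noteq> \<infinity> \<Longrightarrow> f p \<noteq> \<infinity>"
  by (auto simp: oconj_infinity split: if_splits)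

section \<open>Soundness of diagrams\<close>

lemma eval_in_W: "valuation \<theta> \<Longrightarrow> eval \<theta> t \<in> W"
  by (induction t)
    (auto simp: valuation_def comp_in_W oconj_in_W lconj_in_W rconj_in_W id_in_W botW_in_W)

fun eval_sample :: "('v \<Rightarrow> enat \<Rightarrow> enat) \<Rightarrow> enat \<Rightarrow> ('v, 'k) sample \<Rightarrow> enat" where
  "eval_sample \<theta> p (SVar \<kappa>) = p"
| "eval_sample \<theta> p (SApp t a) = eval \<theta> t (eval_sample \<theta> p a)"
| "eval_sample \<theta> p (SS a) = eSuc (eval_sample \<theta> p a)"
| "eval_sample \<theta> p (SP a) = eval_sample \<theta> p a - 1"
| "eval_sample \<theta> p (SLast t) = last_point (eval \<theta> t)"

lemma diagram_eval_sample:
  assumes \<theta>: "valuation \<theta>"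
  shows "diagram D (eval_sample \<theta> p)"
  using eval_in_W[OF \<theta>]
  unfolding diagram_def
  by (simp add: W_monoD last_point_le_iff W_infinity_if_last_point_infinite last_point_value
    last_point_botW last_point_comp_eq_infinity_iff
    oconj_values oconj_finite last_point_oconj_finite oconj_infinity_finite_imp_finite
    rconj_cancel less_apply_eSuc_rconj last_point_eq_infinity_if_rconj apply_eSuc_rconj_infinity
    le_apply_lconj apply_lconj_minus_1_less lconj_eq_infinity_imp_less
    last_point_eq_infinity_if_lconj apply_lconj_infinity)

section \<open>Finite saturations\<close>

lemma saturation_closed: "a \<in> saturation A \<Longrightarrow> leads a b \<Longrightarrow> b \<in> saturation A"
  unfolding saturation_def by (auto intro: rtranclp.rtrancl_into_rtrancl)

lemma subset_saturation: "A \<subseteq> saturation A"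
  unfolding saturation_def by auto

fun postorder :: "'v bterm \<Rightarrow> 'v bterm list" where
  "postorder (TComp t u) = postorder t @ postorder u @ [TComp t u]"
| "postorder (TO t) = postorder t @ [TO t]"
| "postorder (TL t) = postorder t @ [TL t]"
| "postorder (TR t) = postorder t @ [TR t]"
| "postorder t = [t]"

lemma postorder_snoc: "\<exists>xs. postorder t = xs @ [t]"
  by (cases t) auto

lemma suffix_postorder_last: "suffix (postorder s @ ys) T \<Longrightarrow> suffix (s # ys) T"
  using postorder_snoc[of s] by (auto intro: suffix_order.trans suffix_appendI)

lemma suffix_Cons_postorder_append:
  "suffix (s # ys) (postorder t @ zs) \<Longrightarrow>
    suffix (s # ys) zs \<or> suffix (postorder s @ ys) (postorder t @ zs)"
proof (induction t arbitrary: zs)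
  case (TComp t u)
  have "suffix (s # ys) (postorder u @ TComp t u # zs) \<or>
      suffix (postorder s @ ys) (postorder (TComp t u) @ zs)"
    using TComp.IH(1)[of "postorder u @ TComp t u # zs"] TComp.prems by auto
  then have "suffix (s # ys) (TComp t u # zs) \<or>
      suffix (postorder s @ ys) (postorder (TComp t u) @ zs)"
    using TComp.IH(2)[of "TComp t u # zs"] by (auto intro: suffix_appendI)
  then show ?case by (auto simp: suffix_Cons)
next
  case (TO t)
  then have "suffix (s # ys) (TO t # zs) \<or> suffix (postorder s @ ys) (postorder (TO t) @ zs)"
    by auto
  then show ?case by (auto simp: suffix_Cons)
next
  case (TL t)
  then have "suffix (s # ys) (TL t # zs) \<or> suffix (postorder s @ ys) (postorder (TL t) @ zs)"
    by auto
  then show ?case by (auto simp: suffix_Cons)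
next
  case (TR t)
  then have "suffix (s # ys) (TR t # zs) \<or> suffix (postorder s @ ys) (postorder (TR t) @ zs)"
    by auto
  then show ?case by (auto simp: suffix_Cons)
qed (auto simp: suffix_Cons)

lemma suffix_Cons_postorder:
  "suffix (s # ys) (postorder t) \<Longrightarrow> suffix (postorder s @ ys) (postorder t)"
  using suffix_Cons_postorder_append[of s ys t "[]"] by simp

text \<open>Inner applications use occurrences further to the right in the list, so the nesting
  depth of such samples is bounded by its length.\<close>

fun ordered_sample :: "'v bterm list \<Rightarrow> 'k \<Rightarrow> 'v bterm list \<Rightarrow> ('v, 'k) sample \<Rightarrow> bool" where
  "ordered_sample T \<kappa> ys (SVar \<kappa>') \<longleftrightarrow> \<kappa>' = \<kappa>"
| "ordered_sample T \<kappa> ys (SApp t a) \<longleftrightarrow> (\<exists>zs. suffix (t # zs) ys \<and> ordered_sample T \<kappa> zs a)"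
| "ordered_sample T \<kappa> ys (SS a) \<longleftrightarrow> (\<exists>t b. a = SApp t b) \<and> ordered_sample T \<kappa> ys a"
| "ordered_sample T \<kappa> ys (SP a) \<longleftrightarrow> (\<exists>t b. a = SApp t b) \<and> ordered_sample T \<kappa> ys a"
| "ordered_sample T \<kappa> ys (SLast t) \<longleftrightarrow> t \<in> set T"

lemma ordered_sample_suffix:
  "ordered_sample T \<kappa> ys a \<Longrightarrow> suffix ys ys' \<Longrightarrow> ordered_sample T \<kappa> ys' a"
  by (induction a arbitrary: ys) (auto intro: suffix_order.trans)

lemma finite_ordered_samples: "finite {a. ordered_sample T \<kappa> ys a}"
proof -
  define A where "A ys = {a. ordered_sample T \<kappa> ys a \<and> (\<exists>t b. a = SApp t b)}" for ys
  have cover: "{a. ordered_sample T \<kappa> ys a} \<subseteq>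
      insert (SVar \<kappa>) (SLast ` set T) \<union> A ys \<union> SS ` A ys \<union> SP ` A ys" for ys
  proof
    fix a assume "a \<in> {a. ordered_sample T \<kappa> ys a}"
    then show "a \<in> insert (SVar \<kappa>) (SLast ` set T) \<union> A ys \<union> SS ` A ys \<union> SP ` A ys"
      by (cases a) (auto simp: A_def)
  qed
  have finite_if: "finite {a. ordered_sample T \<kappa> ys a}" if "finite (A ys)" for ys
    using finite_subset[OF cover[of ys]] that by simp
  have "finite (A ys)"
  proof (induction ys)
    case Nil
    have "A [] = {}" by (auto simp: A_def)
    then show ?case by simp
  next
    case (Cons y ys)
    have "A (y # ys) \<subseteq> SApp y ` {a. ordered_sample T \<kappa> ys a} \<union> A ys"
      by (auto simp: A_def suffix_Cons)
    then show ?case using Cons.IH finite_if[of ys] by (simp add: finite_subset)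
  qed
  then show ?thesis by (rule finite_if)
qed

lemma ordered_sample_unary:
  assumes u: "postorder u = postorder t @ [u]"
    and a: "ordered_sample (postorder t0) \<kappa> (postorder t0) (SApp u a)"
  shows "ordered_sample (postorder t0) \<kappa> (postorder t0) (SApp t a)"
    and "ordered_sample (postorder t0) \<kappa> (postorder t0) (SApp t (SApp u a))"
    and "ordered_sample (postorder t0) \<kappa> (postorder t0) (SApp t (SS (SApp u a)))"
    and "ordered_sample (postorder t0) \<kappa> (postorder t0) (SApp t (SP (SApp u a)))"
proof -
  obtain zs where zs: "suffix (u # zs) (postorder t0)" "ordered_sample (postorder t0) \<kappa> zs a"
    using a by auto
  have tu: "suffix (t # u # zs) (postorder t0)"
    using suffix_Cons_postorder[OF zs(1)] u suffix_postorder_last[of t "u # zs"] by simp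
  have "ordered_sample (postorder t0) \<kappa> (u # zs) a"
    using zs(2) by (rule ordered_sample_suffix) (auto intro: suffix_ConsI)
  then show "ordered_sample (postorder t0) \<kappa> (postorder t0) (SApp t a)"
    using tu by auto
  show "ordered_sample (postorder t0) \<kappa> (postorder t0) (SApp t (SApp u a))"
    and "ordered_sample (postorder t0) \<kappa> (postorder t0) (SApp t (SS (SApp u a)))"
    and "ordered_sample (postorder t0) \<kappa> (postorder t0) (SApp t (SP (SApp u a)))"
    using tu zs(2) by auto
qed

lemma ordered_sample_comp:
  assumes "ordered_sample (postorder t0) \<kappa> (postorder t0) (SApp (TComp t u) a)"
  shows "ordered_sample (postorder t0) \<kappa> (postorder t0) (SApp t (SApp u a))"
proof -
  obtain zs where
    zs: "suffix (TComp t u # zs) (postorder t0)" "ordered_sample (postorder t0) \<kappa> zs a"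
    using assms by auto
  have "suffix (postorder t @ postorder u @ TComp t u # zs) (postorder t0)"
    using suffix_Cons_postorder[OF zs(1)] by simp
  then have "suffix (t # postorder u @ TComp t u # zs) (postorder t0)"
    using suffix_postorder_last[of t] by simp
  moreover have "suffix (u # TComp t u # zs) (postorder u @ TComp t u # zs)"
    using suffix_postorder_last[of u "TComp t u # zs"] by simp
  moreover have "ordered_sample (postorder t0) \<kappa> (TComp t u # zs) a"
    using zs(2) by (rule ordered_sample_suffix) (auto intro: suffix_ConsI)
  ultimately show ?thesis by auto
qed

lemma ordered_sample_leads:
  assumes "leads a b" and "ordered_sample (postorder t0) \<kappa> (postorder t0) a"
  shows "ordered_sample (postorder t0) \<kappa> (postorder t0) b"
  using assms
proof (induction rule: leads.induct)
  case (app_arg t a)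
  then show ?case by (auto intro: ordered_sample_suffix dest: suffix_ConsD)
next
  case (comp t u a)
  then show ?case by (rule ordered_sample_comp)
next
  case (o_un t a)
  then show ?case using ordered_sample_unary(1)[of "TO t" t] by simp
next
  case (r1 t a)
  then show ?case using ordered_sample_unary(2)[of "TR t" t] by simp
next
  case (r2 t a)
  then show ?case using ordered_sample_unary(3)[of "TR t" t] by simp
next
  case (l1 t a)
  then show ?case using ordered_sample_unary(2)[of "TL t" t] by simp
next
  case (l2 t a)
  then show ?case using ordered_sample_unary(4)[of "TL t" t] by simp
next
  case (last t a)
  then show ?case by (auto dest: set_mono_suffix)
qed auto

lemma finite_saturation:
  assumes "finite T"
  shows "finite (saturation ((\<lambda>t. SApp t (SVar \<kappa>)) ` T))"
proof -
  have "saturation ((\<lambda>t. SApp t (SVar \<kappa>)) ` T) \<subseteq>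
    (\<Union>t\<in>T. {a. ordered_sample (postorder t) \<kappa> (postorder t) a})"
  proof
    fix b assume "b \<in> saturation ((\<lambda>t. SApp t (SVar \<kappa>)) ` T)"
    then obtain t where t: "t \<in> T" "leads\<^sup>*\<^sup>* (SApp t (SVar \<kappa>)) b"
      unfolding saturation_def by auto
    have "ordered_sample (postorder t) \<kappa> (postorder t) (SApp t (SVar \<kappa>))"
      using suffix_postorder_last[of t "[]" "postorder t"] by auto
    with t(2) have "ordered_sample (postorder t) \<kappa> (postorder t) b"
      by (induction rule: rtranclp_induct) (auto intro: ordered_sample_leads)
    then show "b \<in> (\<Union>t\<in>T. {a. ordered_sample (postorder t) \<kappa> (postorder t) a})"
      using t(1) by auto
  qed
  moreover have "finite (\<Union>t\<in>T. {a. ordered_sample (postorder t) \<kappa> (postorder t) a})"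
    by (intro finite_UN_I assms finite_ordered_samples)
  ultimately show ?thesis by (rule finite_subset)
qed

section \<open>Valuations realizing a diagram\<close>

locale finite_diagram =
  fixes D :: "('v, 'k) sample set" and \<delta> :: "('v, 'k) sample \<Rightarrow> enat"
  assumes diagram: "diagram D \<delta>"
    and closed: "a \<in> D \<Longrightarrow> leads a b \<Longrightarrow> b \<in> D"
    and finite_D: "finite D"
begin

lemma S1: "a \<in> D \<Longrightarrow> b \<in> D \<Longrightarrow> SApp t a \<in> D \<Longrightarrow> SApp t b \<in> D \<Longrightarrow>
    \<delta> a \<le> \<delta> b \<Longrightarrow> \<delta> (SApp t a) \<le> \<delta> (SApp t b)"
  using diagram by (simp add: diagram_def)

lemma S2: "a \<in> D \<Longrightarrow> SApp t a \<in> D \<Longrightarrow> \<delta> a = 0 \<Longrightarrow> \<delta> (SApp t a) = 0"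
  using diagram by (simp add: diagram_def)

lemma S3: "a \<in> D \<Longrightarrow> SP a \<in> D \<Longrightarrow> \<delta> (SP a) = \<delta> a - 1"
  using diagram by (simp add: diagram_def)

lemma S4: "a \<in> D \<Longrightarrow> SS a \<in> D \<Longrightarrow> \<delta> (SS a) = eSuc (\<delta> a)"
  using diagram by (simp add: diagram_def)

lemma S5: "a \<in> D \<Longrightarrow> SApp t a \<in> D \<Longrightarrow> SLast t \<in> D \<Longrightarrow> SApp t (SLast t) \<in> D \<Longrightarrow>
    \<delta> (SLast t) \<le> \<delta> a \<longleftrightarrow> \<delta> (SApp t a) = \<delta> (SApp t (SLast t))"
  using diagram by (simp add: diagram_def)

lemma S6: "SLast t \<in> D \<Longrightarrow> SApp t (SLast t) \<in> D \<Longrightarrow>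
    \<delta> (SLast t) = \<infinity> \<Longrightarrow> \<delta> (SApp t (SLast t)) = \<infinity>"
  using diagram by (simp add: diagram_def)

lemma L1: "a \<in> D \<Longrightarrow> SApp TId a \<in> D \<Longrightarrow> \<delta> (SApp TId a) = \<delta> a"
  using diagram by (simp add: diagram_def)

lemma L2:
  assumes "SApp TBot a \<in> D" "SLast TBot \<in> D"
  shows "\<delta> (SLast TBot) = 0"
proof -
  have "\<forall>a. SApp TBot a \<in> D \<and> SLast TBot \<in> D \<longrightarrow> \<delta> (SLast TBot) = 0"
    using diagram by (simp add: diagram_def)
  then show ?thesis using assms by blast
qed

lemma L3: "SApp (TComp t u) a \<in> D \<Longrightarrow> SApp t (SApp u a) \<in> D \<Longrightarrow>
    \<delta> (SApp (TComp t u) a) = \<delta> (SApp t (SApp u a))"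
  using diagram by (simp add: diagram_def)

lemma L4: "SApp (TComp t u) (SLast (TComp t u)) \<in> D \<Longrightarrow> SLast (TComp t u) \<in> D \<Longrightarrow>
    SLast t \<in> D \<Longrightarrow> SLast u \<in> D \<Longrightarrow>
    \<delta> (SLast (TComp t u)) = \<infinity> \<Longrightarrow> \<delta> (SLast t) = \<infinity> \<and> \<delta> (SLast u) = \<infinity>"
  using diagram by (simp add: diagram_def)

lemma O1: "SApp (TO t) a \<in> D \<Longrightarrow> \<delta> (SApp (TO t) a) = 0 \<or> \<delta> (SApp (TO t) a) = \<infinity>"
  using diagram by (simp add: diagram_def)

lemma O2: "a \<in> D \<Longrightarrow> SApp (TO t) a \<in> D \<Longrightarrow> SApp t a \<in> D \<Longrightarrow> \<delta> a \<noteq> \<infinity> \<Longrightarrow>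
    \<delta> (SApp (TO t) a) = \<infinity> \<longleftrightarrow> \<delta> (SApp t a) = \<infinity>"
  using diagram by (simp add: diagram_def)

lemma O3: "SLast (TO t) \<in> D \<Longrightarrow> \<delta> (SLast (TO t)) \<noteq> \<infinity>"
  using diagram by (simp add: diagram_def)

lemma O4: "a \<in> D \<Longrightarrow> SApp t a \<in> D \<Longrightarrow> SApp (TO t) (SLast (TO t)) \<in> D \<Longrightarrow>
    \<delta> (SApp (TO t) (SLast (TO t))) \<noteq> \<infinity> \<Longrightarrow> \<delta> a \<noteq> \<infinity> \<Longrightarrow> \<delta> (SApp t a) \<noteq> \<infinity>"
  using diagram by (simp add: diagram_def)

lemma R1: "a \<in> D \<Longrightarrow> SApp t (SApp (TR t) a) \<in> D \<Longrightarrow> \<delta> (SApp t (SApp (TR t) a)) \<le> \<delta> a"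
  using diagram by (simp add: diagram_def)

lemma R2: "a \<in> D \<Longrightarrow> SApp (TR t) a \<in> D \<Longrightarrow> SApp t (SS (SApp (TR t) a)) \<in> D \<Longrightarrow>
    \<delta> a \<noteq> 0 \<Longrightarrow> \<delta> a \<noteq> \<infinity> \<Longrightarrow> \<delta> (SApp (TR t) a) \<noteq> \<infinity> \<Longrightarrow>
    \<delta> a < \<delta> (SApp t (SS (SApp (TR t) a)))"
  using diagram by (simp add: diagram_def)

lemma R3: "SApp (TR t) (SLast (TR t)) \<in> D \<Longrightarrow> SLast (TR t) \<in> D \<Longrightarrow> SLast t \<in> D \<Longrightarrow>
    \<delta> (SLast (TR t)) = \<infinity> \<Longrightarrow> \<delta> (SLast t) = \<infinity>"
  using diagram by (simp add: diagram_def)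

lemma R4: "SApp (TR t) (SLast (TR t)) \<in> D \<Longrightarrow> SApp t (SS (SApp (TR t) (SLast (TR t)))) \<in> D \<Longrightarrow>
    \<delta> (SApp (TR t) (SLast (TR t))) \<noteq> \<infinity> \<Longrightarrow> \<delta> (SApp t (SS (SApp (TR t) (SLast (TR t))))) = \<infinity>"
  using diagram by (simp add: diagram_def)

lemma \<Lambda>1: "a \<in> D \<Longrightarrow> SApp t (SApp (TL t) a) \<in> D \<Longrightarrow>
    \<delta> (SApp (TL t) a) \<noteq> \<infinity> \<Longrightarrow> \<delta> a \<le> \<delta> (SApp t (SApp (TL t) a))"
  using diagram by (simp add: diagram_def)

lemma \<Lambda>2: "a \<in> D \<Longrightarrow> SApp (TL t) a \<in> D \<Longrightarrow> SApp t (SP (SApp (TL t) a)) \<in> D \<Longrightarrow>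
    \<delta> a \<noteq> 0 \<Longrightarrow> \<delta> a \<noteq> \<infinity> \<Longrightarrow> \<delta> (SApp (TL t) a) \<noteq> \<infinity> \<Longrightarrow>
    \<delta> (SApp t (SP (SApp (TL t) a))) < \<delta> a"
  using diagram by (simp add: diagram_def)

lemma \<Lambda>3: "a \<in> D \<Longrightarrow> SApp (TL t) a \<in> D \<Longrightarrow> SApp t (SApp (TL t) a) \<in> D \<Longrightarrow>
    \<delta> a \<noteq> \<infinity> \<Longrightarrow> \<delta> (SApp (TL t) a) = \<infinity> \<Longrightarrow> \<delta> (SApp t (SApp (TL t) a)) < \<delta> a"
  using diagram by (simp add: diagram_def)

lemma \<Lambda>4: "SApp (TL t) (SLast (TL t)) \<in> D \<Longrightarrow> SLast (TL t) \<in> D \<Longrightarrow> SLast t \<in> D \<Longrightarrow>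
    \<delta> (SLast (TL t)) = \<infinity> \<Longrightarrow> \<delta> (SLast t) = \<infinity>"
  using diagram by (simp add: diagram_def)

lemma \<Lambda>5: "SApp (TL t) (SLast (TL t)) \<in> D \<Longrightarrow> SApp t (SApp (TL t) (SLast (TL t))) \<in> D \<Longrightarrow>
    \<delta> (SApp (TL t) (SLast (TL t))) \<noteq> \<infinity> \<Longrightarrow> \<delta> (SApp t (SApp (TL t) (SLast (TL t)))) = \<infinity>"
  using diagram by (simp add: diagram_def)

lemma arg_in_D: "SApp t a \<in> D \<Longrightarrow> a \<in> D"
  using closed leads.app_arg by blast

lemma last_app_in_D: "SApp t a \<in> D \<Longrightarrow> SApp t (SLast t) \<in> D"
  using closed leads.last by blast

lemma last_in_D: "SApp t a \<in> D \<Longrightarrow> SLast t \<in> D"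
  using arg_in_D last_app_in_D by blast

lemma last_le_iff_value_eq:
  "SApp t a \<in> D \<Longrightarrow> \<delta> (SLast t) \<le> \<delta> a \<longleftrightarrow> \<delta> (SApp t a) = \<delta> (SApp t (SLast t))"
  using S5 arg_in_D last_in_D last_app_in_D by blast

lemma value_at_last_eq_infinity:
  "SApp t a \<in> D \<Longrightarrow> \<delta> (SLast t) = \<infinity> \<Longrightarrow> \<delta> (SApp t (SLast t)) = \<infinity>"
  using S6 last_in_D last_app_in_D by blast

lemma value_eq_value_at_last:
  assumes "SApp t a \<in> D" "\<delta> a = \<infinity>"
  shows "\<delta> (SApp t a) = \<delta> (SApp t (SLast t))"
  using last_le_iff_value_eq[OF assms(1)] assms(2) by simp

text \<open>If last(x) = \<infinity> it must not reach its limit at any finite point; adding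
  p - finite_bound x achieves this without changing the prescribed values.\<close>

definition interp :: "'v \<Rightarrow> enat \<Rightarrow> enat" where
  "interp x p = (SUP b\<in>{b. SApp (TVar x) b \<in> D \<and> \<delta> b \<le> p}. \<delta> (SApp (TVar x) b))"

definition finite_bound :: "'v \<Rightarrow> enat" where
  "finite_bound x = Sup {\<delta> b |b. SApp (TVar x) b \<in> D \<and> \<delta> b \<noteq> \<infinity>}"

definition warp :: "'v \<Rightarrow> enat \<Rightarrow> enat" where
  "warp x = (if \<delta> (SLast (TVar x)) = \<infinity> then (\<lambda>p. interp x p + (p - finite_bound x)) else interp x)"

lemma interp_mono: "p \<le> q \<Longrightarrow> interp x p \<le> interp x q"
  unfolding interp_def by (rule SUP_subset_mono) auto

lemma interp_at:
  assumes b: "SApp (TVar x) b \<in> D"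
  shows "interp x (\<delta> b) = \<delta> (SApp (TVar x) b)"
  unfolding interp_def
proof (rule antisym)
  show "(SUP b'\<in>{b'. SApp (TVar x) b' \<in> D \<and> \<delta> b' \<le> \<delta> b}. \<delta> (SApp (TVar x) b'))
    \<le> \<delta> (SApp (TVar x) b)"
  proof (rule SUP_least)
    fix b' assume "b' \<in> {b'. SApp (TVar x) b' \<in> D \<and> \<delta> b' \<le> \<delta> b}"
    then have b': "SApp (TVar x) b' \<in> D" "\<delta> b' \<le> \<delta> b" by auto
    show "\<delta> (SApp (TVar x) b') \<le> \<delta> (SApp (TVar x) b)"
      using S1[OF arg_in_D[OF b'(1)] arg_in_D[OF b] b'(1) b b'(2)] .
  qed
  show "\<delta> (SApp (TVar x) b)
    \<le> (SUP b'\<in>{b'. SApp (TVar x) b' \<in> D \<and> \<delta> b' \<le> \<delta> b}. \<delta> (SApp (TVar x) b'))"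
    using b by (intro SUP_upper) auto
qed

lemma interp_zero: "interp x 0 = 0"
proof -
  have "interp x 0 \<le> 0" unfolding interp_def
    by (rule SUP_least) (auto dest: arg_in_D S2[OF arg_in_D])
  then show ?thesis by simp
qed

lemma finite_arguments: "finite {b. SApp t b \<in> D \<and> P b}"
  using finite_D by (rule finite_subset[rotated]) (auto dest: arg_in_D)

lemma interp_finite:
  assumes last: "\<delta> (SLast (TVar x)) = \<infinity>"
  shows "interp x (enat n) \<noteq> \<infinity>"
proof -
  have finite_values: "\<delta> (SApp (TVar x) b) \<noteq> \<infinity>" if b: "SApp (TVar x) b \<in> D" "\<delta> b \<le> enat n" for b
  proof -
    have "\<not> \<delta> (SLast (TVar x)) \<le> \<delta> b" using last b(2) by (cases "\<delta> b") auto
    then have "\<delta> (SApp (TVar x) b) \<noteq> \<delta> (SApp (TVar x) (SLast (TVar x)))"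
      using last_le_iff_value_eq[OF b(1)] by simp
    moreover have "\<delta> (SApp (TVar x) (SLast (TVar x))) = \<infinity>"
      using value_at_last_eq_infinity[OF b(1) last] .
    ultimately show ?thesis by simp
  qed
  have "\<infinity> \<notin> (\<lambda>b. \<delta> (SApp (TVar x) b)) ` {b. SApp (TVar x) b \<in> D \<and> \<delta> b \<le> enat n}"
  proof
    assume "\<infinity> \<in> (\<lambda>b. \<delta> (SApp (TVar x) b)) ` {b. SApp (TVar x) b \<in> D \<and> \<delta> b \<le> enat n}"
    then obtain b where "SApp (TVar x) b \<in> D" "\<delta> b \<le> enat n" "\<infinity> = \<delta> (SApp (TVar x) b)" by auto
    then show False using finite_values by metis
  qed
  then show ?thesis
    unfolding interp_def by (intro finite_Sup_enat_neq_infinity finite_imageI finite_arguments)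
qed

lemma finite_bound_finite: "finite_bound x \<noteq> \<infinity>"
  unfolding finite_bound_def
proof (rule finite_Sup_enat_neq_infinity)
  have "{\<delta> b |b. SApp (TVar x) b \<in> D \<and> \<delta> b \<noteq> \<infinity>} = \<delta> ` {b. SApp (TVar x) b \<in> D \<and> \<delta> b \<noteq> \<infinity>}"
    by auto
  then show "finite {\<delta> b |b. SApp (TVar x) b \<in> D \<and> \<delta> b \<noteq> \<infinity>}"
    using finite_arguments by simp
qed auto

lemma le_finite_bound: "SApp (TVar x) b \<in> D \<Longrightarrow> \<delta> b \<noteq> \<infinity> \<Longrightarrow> \<delta> b \<le> finite_bound x"
  unfolding finite_bound_def by (rule Sup_upper) auto

lemma interp_in_W:
  assumes "\<delta> (SLast (TVar x)) \<noteq> \<infinity>"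
  shows "interp x \<in> W"
proof (rule WI)
  show "mono (interp x)" by (rule monoI) (rule interp_mono)
  show "interp x 0 = 0" by (rule interp_zero)
  show "interp x \<infinity> = (SUP n. interp x (enat n))"
  proof (rule antisym)
    show "(SUP n. interp x (enat n)) \<le> interp x \<infinity>" by (rule SUP_least) (rule interp_mono, simp)
    obtain l where l: "\<delta> (SLast (TVar x)) = enat l" using assms by auto
    show "interp x \<infinity> \<le> (SUP n. interp x (enat n))" unfolding interp_def[of x \<infinity>]
    proof (rule SUP_least)
      fix b assume "b \<in> {b. SApp (TVar x) b \<in> D \<and> \<delta> b \<le> \<infinity>}"
      then have b: "SApp (TVar x) b \<in> D" by simp
      have "\<exists>n. \<delta> (SApp (TVar x) b) = interp x (enat n)"
      proof (cases "\<delta> b")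
        case (enat n)
        then show ?thesis using interp_at[OF b] by (intro exI[of _ n]) simp
      next
        case infinity
        then have "\<delta> (SApp (TVar x) b) = interp x (\<delta> (SLast (TVar x)))"
          using value_eq_value_at_last[OF b] interp_at[OF last_app_in_D[OF b]] by simp
        then show ?thesis using l by auto
      qed
      then obtain n where "\<delta> (SApp (TVar x) b) = interp x (enat n)" by blast
      then show "\<delta> (SApp (TVar x) b) \<le> (SUP n. interp x (enat n))"
        using SUP_upper[of n UNIV "\<lambda>n. interp x (enat n)"] by simp
    qed
  qed
qed

lemma unbounded_interp_in_W: "(\<lambda>p. interp x p + (p - finite_bound x)) \<in> W"
proof (rule WI)
  show "mono (\<lambda>p. interp x p + (p - finite_bound x))"
    by (rule monoI) (intro add_mono interp_mono enat_diff_right_mono)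
  show "interp x 0 + (0 - finite_bound x) = 0" using interp_zero by simp
  obtain m where m: "finite_bound x = enat m" using finite_bound_finite by auto
  have "enat k \<le> (SUP n. interp x (enat n) + (enat n - finite_bound x))" for k
  proof -
    have "enat k \<le> interp x (enat (k + m)) + (enat (k + m) - finite_bound x)"
      using m by (simp add: add_increasing)
    also have "\<dots> \<le> (SUP n. interp x (enat n) + (enat n - finite_bound x))" by (rule SUP_upper) simp
    finally show ?thesis .
  qed
  then have "(SUP n. interp x (enat n) + (enat n - finite_bound x)) = \<infinity>" by (rule enat_eq_infinityI)
  then show "interp x \<infinity> + (\<infinity> - finite_bound x)
    = (SUP n. interp x (enat n) + (enat n - finite_bound x))"
    by simp
qed

lemma valuation_warp: "valuation warp"
  unfolding valuation_def warp_def using interp_in_W unbounded_interp_in_W by simp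

lemma warp_at:
  assumes b: "SApp (TVar x) b \<in> D"
  shows "warp x (\<delta> b) = \<delta> (SApp (TVar x) b)"
proof (cases "\<delta> (SLast (TVar x)) = \<infinity>")
  case last: True
  then have warp: "warp x = (\<lambda>p. interp x p + (p - finite_bound x))" by (simp add: warp_def)
  show ?thesis
  proof (cases "\<delta> b = \<infinity>")
    case True
    then have "\<delta> (SApp (TVar x) b) = \<infinity>"
      using value_eq_value_at_last[OF b] value_at_last_eq_infinity[OF b last] by simp
    then show ?thesis using True warp by simp
  next
    case False
    then have "\<delta> b - finite_bound x = 0"
      using le_finite_bound[OF b False]
      by (cases "\<delta> b"; cases "finite_bound x") (auto simp: zero_enat_def)
    then show ?thesis using interp_at[OF b] warp by simp
  qed
next
  case False
  then have "warp x = interp x" unfolding warp_def by (rule if_not_P)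
  then show ?thesis using interp_at[OF b] by simp
qed

lemma last_point_warp:
  assumes last: "\<delta> (SLast (TVar x)) = \<infinity>"
  shows "last_point (warp x) = \<infinity>"
proof -
  obtain m where m: "finite_bound x = enat m" using finite_bound_finite by auto
  have "interp x (enat n) + (enat n - finite_bound x) \<noteq> \<infinity>" for n
    using interp_finite[OF last, of n] m by (simp add: plus_eq_infty_iff_enat)
  then show ?thesis unfolding last_point_eq_infinity_iff warp_def using last by simp
qed

definition realizes :: "'v bterm \<Rightarrow> bool" where
  "realizes t \<longleftrightarrow> (\<forall>a. SApp t a \<in> D \<longrightarrow> eval warp t (\<delta> a) = \<delta> (SApp t a) \<and>
     (\<delta> (SLast t) = \<infinity> \<longrightarrow> last_point (eval warp t) = \<infinity>))"

lemma realizesI: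
  assumes "\<And>a. SApp t a \<in> D \<Longrightarrow> eval warp t (\<delta> a) = \<delta> (SApp t a)"
    and "\<And>a. SApp t a \<in> D \<Longrightarrow> \<delta> (SLast t) = \<infinity> \<Longrightarrow> last_point (eval warp t) = \<infinity>"
  shows "realizes t"
  using assms unfolding realizes_def by blast

lemma realizes_value: "realizes t \<Longrightarrow> SApp t a \<in> D \<Longrightarrow> eval warp t (\<delta> a) = \<delta> (SApp t a)"
  unfolding realizes_def by blast

lemma realizes_last_point:
  "realizes t \<Longrightarrow> SApp t a \<in> D \<Longrightarrow> \<delta> (SLast t) = \<infinity> \<Longrightarrow> last_point (eval warp t) = \<infinity>"
  unfolding realizes_def by blast

lemma eval_eqI:
  assumes finite_arg: "\<And>b. SApp t b \<in> D \<Longrightarrow> \<delta> b \<noteq> \<infinity> \<Longrightarrow> eval warp t (\<delta> b) = \<delta> (SApp t b)"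
    and infinite_arg: "\<And>b. SApp t b \<in> D \<Longrightarrow> \<delta> b = \<infinity> \<Longrightarrow> eval warp t \<infinity> = \<delta> (SApp t (SLast t))"
    and a: "SApp t a \<in> D"
  shows "eval warp t (\<delta> a) = \<delta> (SApp t a)"
  using finite_arg[OF a] infinite_arg[OF a] value_eq_value_at_last[OF a] by (cases "\<delta> a = \<infinity>") auto

lemma eval_warp_in_W: "eval warp t \<in> W"
  by (rule eval_in_W[OF valuation_warp])

lemma realizes_TVar: "realizes (TVar x)"
  by (rule realizesI) (auto intro: warp_at last_point_warp)

lemma realizes_TId: "realizes TId"
  by (rule realizesI) (auto simp: L1 arg_in_D last_point_eq_infinity_iff)

lemma realizes_TBot: "realizes TBot"
proof (rule realizesI)
  fix a assume a: "SApp TBot a \<in> D"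
  have last: "\<delta> (SLast TBot) = 0" by (rule L2[OF a last_in_D[OF a]])
  have "\<delta> (SApp TBot a) = \<delta> (SApp TBot (SLast TBot))"
    using last_le_iff_value_eq[OF a] last by simp
  also have "\<dots> = 0" by (rule S2[OF last_in_D[OF a] last_app_in_D[OF a] last])
  finally show "eval warp TBot (\<delta> a) = \<delta> (SApp TBot a)" by (simp add: botW_def)
  assume "\<delta> (SLast TBot) = \<infinity>"
  then show "last_point (eval warp TBot) = \<infinity>" using last by simp
qed

lemma realizes_TComp:
  assumes t: "realizes t" and u: "realizes u"
  shows "realizes (TComp t u)"
proof (rule realizesI)
  fix a assume a: "SApp (TComp t u) a \<in> D"
  have tu: "SApp t (SApp u a) \<in> D" by (rule closed[OF a leads.comp])
  have "eval warp (TComp t u) (\<delta> a) = eval warp t (\<delta> (SApp u a))"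
    using realizes_value[OF u arg_in_D[OF tu]] by simp
  also have "\<dots> = \<delta> (SApp (TComp t u) a)"
    using realizes_value[OF t tu] L3[OF a tu] by simp
  finally show "eval warp (TComp t u) (\<delta> a) = \<delta> (SApp (TComp t u) a)" .
  assume last: "\<delta> (SLast (TComp t u)) = \<infinity>"
  have m: "SApp (TComp t u) (SLast (TComp t u)) \<in> D" by (rule last_app_in_D[OF a])
  have tu': "SApp t (SApp u (SLast (TComp t u))) \<in> D" by (rule closed[OF m leads.comp])
  have "\<delta> (SLast t) = \<infinity> \<and> \<delta> (SLast u) = \<infinity>"
    using L4[OF m last_in_D[OF a] last_in_D[OF tu'] last_in_D[OF arg_in_D[OF tu']] last] .
  then show "last_point (eval warp (TComp t u)) = \<infinity>"
    using realizes_last_point[OF t tu'] realizes_last_point[OF u arg_in_D[OF tu']]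
    by (simp add: last_point_comp_eq_infinity_iff eval_warp_in_W)
qed

lemma eval_TO_finite_arg:
  assumes t: "realizes t" and b: "SApp (TO t) b \<in> D" "\<delta> b \<noteq> \<infinity>"
  shows "eval warp (TO t) (\<delta> b) = \<delta> (SApp (TO t) b)"
proof -
  have tb: "SApp t b \<in> D" by (rule closed[OF b(1) leads.o_un])
  have "\<delta> (SApp (TO t) b) = \<infinity> \<longleftrightarrow> eval warp t (\<delta> b) = \<infinity>"
    using O2[OF arg_in_D[OF b(1)] b(1) tb b(2)] realizes_value[OF t tb] by simp
  then show ?thesis
    using oconj_finite[OF eval_warp_in_W b(2)] O1[OF b(1)] by auto
qed

lemma eval_TO_infinite_arg:
  assumes t: "realizes t" and a: "SApp (TO t) a \<in> D" "\<delta> a = \<infinity>"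
  shows "eval warp (TO t) \<infinity> = \<delta> (SApp (TO t) (SLast (TO t)))"
  unfolding eval.simps
proof (rule W_infinity_eqI[OF oconj_in_W])
  let ?f = "eval warp t"
  have ta: "SApp t a \<in> D" by (rule closed[OF a(1) leads.o_un])
  have m: "SApp (TO t) (SLast (TO t)) \<in> D" by (rule last_app_in_D[OF a(1)])
  have L: "\<delta> (SLast (TO t)) \<noteq> \<infinity>" by (rule O3[OF last_in_D[OF a(1)]])
  show "oconj ?f (\<delta> (SLast (TO t))) = \<delta> (SApp (TO t) (SLast (TO t)))"
    using eval_TO_finite_arg[OF t m L] by simp
  show "\<delta> (SLast (TO t)) = \<infinity> \<Longrightarrow> oconj ?f \<infinity> = \<infinity>" using L by simp
  assume V: "\<delta> (SApp (TO t) (SLast (TO t))) \<noteq> \<infinity>"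
  have "?f (enat n) \<noteq> \<infinity>" for n
  proof (cases "\<delta> (SLast t) = \<infinity>")
    case True
    then have "?f (enat n) < ?f \<infinity>"
      using realizes_last_point[OF t ta] W_last_point_eq_infinity_iff[OF eval_warp_in_W] by blast
    then show ?thesis by (cases "?f (enat n)") auto
  next
    case False
    have "?f \<infinity> = \<delta> (SApp t (SLast t))"
      using realizes_value[OF t ta] value_eq_value_at_last[OF ta a(2)] a(2) by simp
    also have "\<dots> \<noteq> \<infinity>" by (rule O4[OF last_in_D[OF ta] last_app_in_D[OF ta] m V False])
    finally show ?thesis using W_monoD[OF eval_warp_in_W, of "enat n" \<infinity> t] by (auto dest: enat_ile)
  qed
  then have "oconj ?f \<infinity> = 0"
    unfolding oconj_infinity[OF eval_warp_in_W] by (simp del: not_infinity_eq)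
  then show "oconj ?f \<infinity> \<le> \<delta> (SApp (TO t) (SLast (TO t)))" by simp
qed

lemma realizes_TO:
  assumes t: "realizes t"
  shows "realizes (TO t)"
proof (rule realizesI)
  fix a assume a: "SApp (TO t) a \<in> D"
  show "eval warp (TO t) (\<delta> a) = \<delta> (SApp (TO t) a)"
    using eval_TO_finite_arg[OF t] eval_TO_infinite_arg[OF t] a by (rule eval_eqI)
  show "\<delta> (SLast (TO t)) = \<infinity> \<Longrightarrow> last_point (eval warp (TO t)) = \<infinity>"
    using O3[OF last_in_D[OF a]] by simp
qed

lemma eval_TR_finite_arg:
  assumes t: "realizes t" and b: "SApp (TR t) b \<in> D" "\<delta> b \<noteq> \<infinity>"
  shows "eval warp (TR t) (\<delta> b) = \<delta> (SApp (TR t) b)"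
proof (cases "\<delta> b = 0")
  case True
  then show ?thesis using S2[OF arg_in_D[OF b(1)] b(1)] by (simp add: rconj_in_W)
next
  case b0: False
  let ?f = "eval warp t" and ?q = "\<delta> (SApp (TR t) b)"
  have tb: "SApp t (SApp (TR t) b) \<in> D" by (rule closed[OF b(1) leads.r1])
  have tsb: "SApp t (SS (SApp (TR t) b)) \<in> D" by (rule closed[OF b(1) leads.r2])
  have below: "?f ?q \<le> \<delta> b"
    using R1[OF arg_in_D[OF b(1)] tb] realizes_value[OF t tb] by simp
  show ?thesis
  proof (cases "?q = \<infinity>")
    case True
    then show ?thesis using rconj_eq_infinity[OF eval_warp_in_W b0 b(2)] below by simp
  next
    case False
    have "\<delta> b < ?f (eSuc ?q)"
      using R2[OF arg_in_D[OF b(1)] b(1) tsb b0 b(2) False] realizes_value[OF t tsb]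
        S4[OF b(1) arg_in_D[OF tsb]] by simp
    then show ?thesis using rconj_eqI[OF eval_warp_in_W b0 b(2) below] by simp
  qed
qed

lemma eval_TR_infinite_arg:
  assumes t: "realizes t" and a: "SApp (TR t) a \<in> D"
  shows "eval warp (TR t) \<infinity> = \<delta> (SApp (TR t) (SLast (TR t)))"
  unfolding eval.simps
proof (rule W_infinity_eqI[OF rconj_in_W])
  let ?f = "eval warp t" and ?V = "\<delta> (SApp (TR t) (SLast (TR t)))"
  have m: "SApp (TR t) (SLast (TR t)) \<in> D" by (rule last_app_in_D[OF a])
  have tm: "SApp t (SApp (TR t) (SLast (TR t))) \<in> D" by (rule closed[OF m leads.r1])
  have tsm: "SApp t (SS (SApp (TR t) (SLast (TR t)))) \<in> D" by (rule closed[OF m leads.r2])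
  show "rconj ?f \<infinity> \<le> ?V" if V: "?V \<noteq> \<infinity>"
  proof (rule rconj_infinity_le[OF eval_warp_in_W])
    show "?f (eSuc ?V) = \<infinity>"
      using R4[OF m tsm V] realizes_value[OF t tsm] S4[OF m arg_in_D[OF tsm]] by simp
  qed
  show "rconj ?f (\<delta> (SLast (TR t))) = ?V" if "\<delta> (SLast (TR t)) \<noteq> \<infinity>"
    using eval_TR_finite_arg[OF t m that] by simp
  show "rconj ?f \<infinity> = \<infinity>" if L: "\<delta> (SLast (TR t)) = \<infinity>"
  proof -
    have "\<delta> (SLast t) = \<infinity>" by (rule R3[OF m last_in_D[OF a] last_in_D[OF tm] L])
    then have "last_point ?f = \<infinity>" by (rule realizes_last_point[OF t tm])
    then show ?thesis
      using last_point_rconj_eq_infinity[OF eval_warp_in_W]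
        W_infinity_if_last_point_infinite[OF rconj_in_W] by blast
  qed
qed

lemma realizes_TR:
  assumes t: "realizes t"
  shows "realizes (TR t)"
proof (rule realizesI)
  fix a assume a: "SApp (TR t) a \<in> D"
  show "eval warp (TR t) (\<delta> a) = \<delta> (SApp (TR t) a)"
    using eval_TR_finite_arg[OF t] eval_TR_infinite_arg[OF t] a by (rule eval_eqI)
  assume L: "\<delta> (SLast (TR t)) = \<infinity>"
  have m: "SApp (TR t) (SLast (TR t)) \<in> D" by (rule last_app_in_D[OF a])
  have tm: "SApp t (SApp (TR t) (SLast (TR t))) \<in> D" by (rule closed[OF m leads.r1])
  have "\<delta> (SLast t) = \<infinity>" by (rule R3[OF m last_in_D[OF a] last_in_D[OF tm] L])
  then show "last_point (eval warp (TR t)) = \<infinity>"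
    using realizes_last_point[OF t tm] last_point_rconj_eq_infinity[OF eval_warp_in_W] by simp
qed

lemma eval_TL_finite_arg:
  assumes t: "realizes t" and b: "SApp (TL t) b \<in> D" "\<delta> b \<noteq> \<infinity>"
  shows "eval warp (TL t) (\<delta> b) = \<delta> (SApp (TL t) b)"
proof (cases "\<delta> b = 0")
  case True
  then show ?thesis using S2[OF arg_in_D[OF b(1)] b(1)] by (simp add: lconj_in_W)
next
  case b0: False
  let ?f = "eval warp t" and ?q = "\<delta> (SApp (TL t) b)"
  have tb: "SApp t (SApp (TL t) b) \<in> D" by (rule closed[OF b(1) leads.l1])
  have tpb: "SApp t (SP (SApp (TL t) b)) \<in> D" by (rule closed[OF b(1) leads.l2])
  have fq: "?f ?q = \<delta> (SApp t (SApp (TL t) b))" by (rule realizes_value[OF t tb])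
  show ?thesis
  proof (cases "?q = \<infinity>")
    case True
    then have "?f \<infinity> < \<delta> b" using \<Lambda>3[OF arg_in_D[OF b(1)] b(1) tb b(2)] fq by simp
    then show ?thesis using lconj_eq_infinity[OF eval_warp_in_W b0 b(2)] True by simp
  next
    case False
    have "\<delta> b \<le> ?f ?q" using \<Lambda>1[OF arg_in_D[OF b(1)] tb False] fq by simp
    moreover have "?f (?q - 1) < \<delta> b"
      using \<Lambda>2[OF arg_in_D[OF b(1)] b(1) tpb b0 b(2) False] realizes_value[OF t tpb]
        S3[OF b(1) arg_in_D[OF tpb]] by simp
    ultimately show ?thesis using lconj_eqI[OF eval_warp_in_W b0 b(2)] by simp
  qed
qed

lemma eval_TL_infinite_arg:
  assumes t: "realizes t" and a: "SApp (TL t) a \<in> D"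
  shows "eval warp (TL t) \<infinity> = \<delta> (SApp (TL t) (SLast (TL t)))"
  unfolding eval.simps
proof (rule W_infinity_eqI[OF lconj_in_W])
  let ?f = "eval warp t" and ?V = "\<delta> (SApp (TL t) (SLast (TL t)))"
  have m: "SApp (TL t) (SLast (TL t)) \<in> D" by (rule last_app_in_D[OF a])
  have tm: "SApp t (SApp (TL t) (SLast (TL t))) \<in> D" by (rule closed[OF m leads.l1])
  show "lconj ?f \<infinity> \<le> ?V" if V: "?V \<noteq> \<infinity>"
  proof -
    have "?f ?V = \<infinity>" using \<Lambda>5[OF m tm V] realizes_value[OF t tm] by simp
    then show ?thesis using lconj_cancel[of ?f ?V] by simp
  qed
  show "lconj ?f (\<delta> (SLast (TL t))) = ?V" if "\<delta> (SLast (TL t)) \<noteq> \<infinity>"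
    using eval_TL_finite_arg[OF t m that] by simp
  show "lconj ?f \<infinity> = \<infinity>" if L: "\<delta> (SLast (TL t)) = \<infinity>"
  proof -
    have "\<delta> (SLast t) = \<infinity>" by (rule \<Lambda>4[OF m last_in_D[OF a] last_in_D[OF tm] L])
    then have "last_point ?f = \<infinity>" by (rule realizes_last_point[OF t tm])
    then show ?thesis
      using last_point_lconj_eq_infinity[OF eval_warp_in_W]
        W_infinity_if_last_point_infinite[OF lconj_in_W] by blast
  qed
qed

lemma realizes_TL:
  assumes t: "realizes t"
  shows "realizes (TL t)"
proof (rule realizesI)
  fix a assume a: "SApp (TL t) a \<in> D"
  show "eval warp (TL t) (\<delta> a) = \<delta> (SApp (TL t) a)"
    using eval_TL_finite_arg[OF t] eval_TL_infinite_arg[OF t] a by (rule eval_eqI)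
  assume L: "\<delta> (SLast (TL t)) = \<infinity>"
  have m: "SApp (TL t) (SLast (TL t)) \<in> D" by (rule last_app_in_D[OF a])
  have tm: "SApp t (SApp (TL t) (SLast (TL t))) \<in> D" by (rule closed[OF m leads.l1])
  have "\<delta> (SLast t) = \<infinity>" by (rule \<Lambda>4[OF m last_in_D[OF a] last_in_D[OF tm] L])
  then show "last_point (eval warp (TL t)) = \<infinity>"
    using realizes_last_point[OF t tm] last_point_lconj_eq_infinity[OF eval_warp_in_W] by simp
qed

lemma realizes_all: "realizes t"
  by (induction t) (auto intro: realizes_TVar realizes_TComp realizes_TO realizes_TL realizes_TR
    realizes_TId realizes_TBot)

end

lemma diagram_realizable:
  assumes "diagram D \<delta>" and "\<And>a b. a \<in> D \<Longrightarrow> leads a b \<Longrightarrow> b \<in> D" and "finite D"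
  shows "\<exists>\<theta>. valuation \<theta> \<and> (\<forall>t a. SApp t a \<in> D \<longrightarrow> eval \<theta> t (\<delta> a) = \<delta> (SApp t a))"
proof -
  interpret finite_diagram D \<delta> using assms by unfold_locales
  show ?thesis using valuation_warp realizes_value[OF realizes_all] by blast
qed

lemma realizable_on_saturation:
  assumes "finite T" and \<delta>: "diagram (saturation ((\<lambda>t. SApp t (SVar \<kappa>)) ` T)) \<delta>"
  shows "\<exists>\<theta>. valuation \<theta> \<and> (\<forall>t\<in>T. eval \<theta> t (\<delta> (SVar \<kappa>)) = \<delta> (SApp t (SVar \<kappa>)))"
proof -
  let ?D = "saturation ((\<lambda>t. SApp t (SVar \<kappa>)) ` T)"
  have "\<exists>\<theta>. valuation \<theta> \<and> (\<forall>t a. SApp t a \<in> ?D \<longrightarrow> eval \<theta> t (\<delta> a) = \<delta> (SApp t a))"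
  proof (rule diagram_realizable)
    show "diagram ?D \<delta>" by (rule \<delta>)
    show "\<And>a b. a \<in> ?D \<Longrightarrow> leads a b \<Longrightarrow> b \<in> ?D" by (rule saturation_closed)
    show "finite ?D" by (rule finite_saturation[OF assms(1)])
  qed
  then obtain \<theta> where \<theta>: "valuation \<theta>" "\<forall>t a. SApp t a \<in> ?D \<longrightarrow> eval \<theta> t (\<delta> a) = \<delta> (SApp t a)"
    by blast
  have "SApp t (SVar \<kappa>) \<in> ?D" if "t \<in> T" for t
    using that subset_saturation[of "(\<lambda>t. SApp t (SVar \<kappa>)) ` T"] by blast
  then have "\<forall>t\<in>T. eval \<theta> t (\<delta> (SVar \<kappa>)) = \<delta> (SApp t (SVar \<kappa>))" using \<theta>(2) by simp
  with \<theta>(1) show ?thesis by blast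
qed

lemma not_id_le_SUP_iff:
  assumes "finite T"
  shows "\<not> (id :: enat \<Rightarrow> enat) \<le> (SUP t\<in>T. F t) \<longleftrightarrow> (\<exists>p. \<forall>t\<in>T. F t p < p)"
proof -
  have "\<not> (id :: enat \<Rightarrow> enat) \<le> (SUP t\<in>T. F t) \<longleftrightarrow> (\<exists>p. (SUP t\<in>T. F t p) < p)"
    by (simp add: le_fun_def not_le image_comp)
  also have "\<dots> \<longleftrightarrow> (\<exists>p. \<forall>t\<in>T. F t p < p)"
  proof (cases "T = {}")
    case True
    then show ?thesis by (auto simp: bot_enat_def intro!: exI[of _ 1])
  next
    case False
    then show ?thesis using assms by (simp add: finite_Sup_less_iff)
  qed
  finally show ?thesis .
qed

theorem theorem3p19:
  fixes ts :: "'v bterm list" and \<kappa> :: 'k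
  shows "(\<not> (\<forall>\<theta>. valuation \<theta> \<longrightarrow> (id :: enat \<Rightarrow> enat) \<le> (SUP t\<in>set ts. eval \<theta> t)))
     \<longleftrightarrow> (\<exists>\<delta>. diagram (saturation ((\<lambda>t. SApp t (SVar \<kappa>)) ` set ts)) \<delta> \<and>
              (\<forall>t\<in>set ts. \<delta> (SApp t (SVar \<kappa>)) < \<delta> (SVar \<kappa>)))"
  (is "?refutable \<longleftrightarrow> (\<exists>\<delta>. diagram ?D \<delta> \<and> ?below \<delta>)")
proof -
  have "?refutable \<longleftrightarrow> (\<exists>\<theta> p. valuation \<theta> \<and> (\<forall>t\<in>set ts. eval \<theta> t p < p))"
    by (simp add: not_id_le_SUP_iff)
  also have "\<dots> \<longleftrightarrow> (\<exists>\<delta>. diagram ?D \<delta> \<and> ?below \<delta>)"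
  proof
    assume "\<exists>\<theta> p. valuation \<theta> \<and> (\<forall>t\<in>set ts. eval \<theta> t p < p)"
    then obtain \<theta> p where \<theta>: "valuation \<theta>" and "\<forall>t\<in>set ts. eval \<theta> t p < p" by blast
    then show "\<exists>\<delta>. diagram ?D \<delta> \<and> ?below \<delta>"
      using diagram_eval_sample[OF \<theta>] by (intro exI[of _ "eval_sample \<theta> p"]) simp
  next
    assume "\<exists>\<delta>. diagram ?D \<delta> \<and> ?below \<delta>"
    then obtain \<delta> where \<delta>: "diagram ?D \<delta>" and below: "?below \<delta>" by blast
    obtain \<theta> where "valuation \<theta>" "\<forall>t\<in>set ts. eval \<theta> t (\<delta> (SVar \<kappa>)) = \<delta> (SApp t (SVar \<kappa>))"
      using realizable_on_saturation[OF finite_set \<delta>] by blast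
    then show "\<exists>\<theta> p. valuation \<theta> \<and> (\<forall>t\<in>set ts. eval \<theta> t p < p)"
      using below by (intro exI[of _ \<theta>] exI[of _ "\<delta> (SVar \<kappa>)"]) simp
  qed
  finally show ?thesis .
qed

end
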